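(* Let $m,n$ be positive integers. $J(\mathbf{P}_{m,n})$ under rowmotion and the set of $(m,n)$-partial fully-packed loop configurations under gyration are in equivariant bijection: there is a bijection $\Phi$ from the set of $(m,n)$-partial fully-packed loop configurations to $J(\mathbf{P}_{m,n})$ such that $\Phi(G(F))=\mathrm{Row}(\Phi(F))$ for every configuration $F$.
   Context: The poset $\mathbf{P}_{m,n}$ has elements the integer triples $(i,j,k)$ with $0\le k\le m-1$, $k\le j\le n-1$, $k\le i\le m-1$, and partial order generated by the covering relations: $(i,j,k)$ covers each of $(i+1,j,k)$, $(i,j+1,k)$, $(i-1,j,k-1)$, $(i,j-1,k-1)$ that is an element of $\mathbf{P}_{m,n}$. $J(P)$ is the set of order ideals of $P$. Rowmotion $\mathrm{Row}:J(P)\to J(P)$ sends $X$ to the order ideal generated by the minimal elements of $P\setminus X$. The graph $G_{m,n}$ has vertex set $\{v_{i,j}:0\le i\le m+1,\ 0\le j\le n+1\}\setminus\{v_{0,0},v_{0,n+1},v_{m+1,0},v_{m+1,n+1}\}$ and edges $v_{i,j}v_{i+1,j}$ for $0\le i\le m$, $1\le j\le n$, and $v_{i,j}v_{i,j+1}$ for $1\le i\le m$, $0\le j\le n$ ($i$ indexes rows from the top, $j$ columns from the left). Vertices $v_{i,j}$ with $1\le i\le m$, $1\le j\le n$ are interior. An $(m,n)$-partial fully-packed loop configuration is a subgraph of $G_{m,n}$ (on all vertices) such that every interior vertex has exactly two incident edges, and: for $1\le j\le n$ the edge $v_{0,j}v_{1,j}$ is present iff $j$ is odd, and for $1\le i\le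 m$ the edge $v_{i,0}v_{i,1}$ is present iff $i$ is even. Squares: for $0\le i\le m$, $0\le j\le n$, the square $Q_{i,j}$ has upper-left corner $v_{i,j}$; its sides are top $v_{i,j}v_{i,j+1}$, bottom $v_{i+1,j}v_{i+1,j+1}$, left $v_{i,j}v_{i+1,j}$, right $v_{i,j+1}v_{i+1,j+1}$ (those that are edges of $G_{m,n}$). $Q_{i,j}$ is even if $i+j$ is even, odd otherwise. The local action on $Q_{i,j}$ (for a configuration $F$, looking at which sides of $Q_{i,j}$ are edges of $F$): if $i=0$ or $j=0$ (boundary square), do nothing. If $1\le i\le m-1$, $1\le j\le n-1$ (interior square): if the sides in $F$ are exactly $\{$top, bottom$\}$, replace them by $\{$left, right$\}$, and vice versa. If $1\le i\le m-1$, $j=n$ (right exterior): swap exactly $\{$left$\}$ with exactly $\{$top, bottom$\}$. If $i=m$, $1\le j\le n-1$ (bottom exterior): swap exactly $\{$top$\}$ with exactly $\{$left, right$\}$. If $i=m$, $j=n$: swap exactly $\{$left$\}$ with exactly $\{$top$\}$. In all other cases do nothing. Gyration $G$ applies the local action to all even squares, then to all odd squares; it maps partial fully-packed loop configurations to partial fully-packed loop configurations. *)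

theory Defs
  imports Main
begin

definition Pmn :: "nat \<Rightarrow> nat \<Rightarrow> (int \<times> int \<times> int) set" where
  "Pmn m n = {(i,j,k). 0 \<le> k \<and> k \<le> int m - 1 \<and> k \<le> j \<and> j \<le> int n - 1 \<and> k \<le> i \<and> i \<le> int m - 1}"

text \<open>Covering pairs (y, x): x covers y, i.e. y is smaller than x.\<close>
definition cover_rel :: "nat \<Rightarrow> nat \<Rightarrow> ((int \<times> int \<times> int) \<times> (int \<times> int \<times> int)) set" where
  "cover_rel m n = {(y, x). x \<in> Pmn m n \<and> y \<in> Pmn m n \<and>
     (case x of (i,j,k) \<Rightarrow>
        y = (i+1,j,k) \<or> y = (i,j+1,k) \<or> y = (i-1,j,k-1) \<or> y = (i,j-1,k-1))}"

definition P_le :: "nat \<Rightarrow> nat \<Rightarrow> int \<times> int \<times> int \<Rightarrow> int \<times> int \<times> int \<Rightarrow> bool" where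
  "P_le m n y x \<longleftrightarrow> y \<in> Pmn m n \<and> x \<in> Pmn m n \<and> (y, x) \<in> (cover_rel m n)\<^sup>*"

definition order_ideals :: "nat \<Rightarrow> nat \<Rightarrow> (int \<times> int \<times> int) set set" where
  "order_ideals m n = {X. X \<subseteq> Pmn m n \<and> (\<forall>x\<in>X. \<forall>y. P_le m n y x \<longrightarrow> y \<in> X)}"

definition minimal_elems :: "nat \<Rightarrow> nat \<Rightarrow> (int \<times> int \<times> int) set \<Rightarrow> (int \<times> int \<times> int) set" where
  "minimal_elems m n S = {x \<in> S. \<forall>y\<in>S. P_le m n y x \<longrightarrow> y = x}"

definition rowmotion :: "nat \<Rightarrow> nat \<Rightarrow> (int \<times> int \<times> int) set \<Rightarrow> (int \<times> int \<times> int) set" where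
  "rowmotion m n X = {y. \<exists>z \<in> minimal_elems m n (Pmn m n - X). P_le m n y z}"

text \<open>Vertex v_{i,j} is the pair (i,j); an edge is the 2-element set of its endpoints.\<close>
definition Gverts :: "nat \<Rightarrow> nat \<Rightarrow> (nat \<times> nat) set" where
  "Gverts m n = {(i,j). i \<le> m+1 \<and> j \<le> n+1} - {(0,0),(0,n+1),(m+1,0),(m+1,n+1)}"

definition Gedges :: "nat \<Rightarrow> nat \<Rightarrow> (nat \<times> nat) set set" where
  "Gedges m n = {{(i,j),(i+1,j)} | i j. i \<le> m \<and> 1 \<le> j \<and> j \<le> n}
              \<union> {{(i,j),(i,j+1)} | i j. 1 \<le> i \<and> i \<le> m \<and> j \<le> n}"

definition interior :: "nat \<Rightarrow> nat \<Rightarrow> nat \<times> nat \<Rightarrow> bool" where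
  "interior m n v \<longleftrightarrow> 1 \<le> fst v \<and> fst v \<le> m \<and> 1 \<le> snd v \<and> snd v \<le> n"

definition PFPL :: "nat \<Rightarrow> nat \<Rightarrow> (nat \<times> nat) set set set" where
  "PFPL m n = {F. F \<subseteq> Gedges m n
     \<and> (\<forall>v \<in> Gverts m n. interior m n v \<longrightarrow> card {e \<in> F. v \<in> e} = 2)
     \<and> (\<forall>j. 1 \<le> j \<and> j \<le> n \<longrightarrow> ({(0,j),(1,j)} \<in> F \<longleftrightarrow> odd j))
     \<and> (\<forall>i. 1 \<le> i \<and> i \<le> m \<longrightarrow> ({(i,0),(i,1)} \<in> F \<longleftrightarrow> even i))}"

definition sq_top :: "nat \<Rightarrow> nat \<Rightarrow> (nat \<times> nat) set" where
  "sq_top i j = {(i,j),(i,j+1)}"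
definition sq_bottom :: "nat \<Rightarrow> nat \<Rightarrow> (nat \<times> nat) set" where
  "sq_bottom i j = {(i+1,j),(i+1,j+1)}"
definition sq_left :: "nat \<Rightarrow> nat \<Rightarrow> (nat \<times> nat) set" where
  "sq_left i j = {(i,j),(i+1,j)}"
definition sq_right :: "nat \<Rightarrow> nat \<Rightarrow> (nat \<times> nat) set" where
  "sq_right i j = {(i,j+1),(i+1,j+1)}"

definition swap_sides :: "(nat \<times> nat) set set \<Rightarrow> (nat \<times> nat) set set \<Rightarrow> (nat \<times> nat) set set
    \<Rightarrow> (nat \<times> nat) set set \<Rightarrow> (nat \<times> nat) set set" where
  "swap_sides S A B F =
     (if F \<inter> S = A then (F - A) \<union> B
      else if F \<inter> S = B then (F - B) \<union> A
      else F)"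

definition local_action :: "nat \<Rightarrow> nat \<Rightarrow> nat \<times> nat \<Rightarrow> (nat \<times> nat) set set \<Rightarrow> (nat \<times> nat) set set" where
  "local_action m n q F =
     (case q of (i,j) \<Rightarrow>
       let T = sq_top i j; Bo = sq_bottom i j; L = sq_left i j; R = sq_right i j;
           S = {T, Bo, L, R} \<inter> Gedges m n in
       if i = 0 \<or> j = 0 then F
       else if 1 \<le> i \<and> i \<le> m - 1 \<and> 1 \<le> j \<and> j \<le> n - 1 then swap_sides S {T, Bo} {L, R} F
       else if 1 \<le> i \<and> i \<le> m - 1 \<and> j = n then swap_sides S {L} {T, Bo} F
       else if i = m \<and> 1 \<le> j \<and> j \<le> n - 1 then swap_sides S {T} {L, R} F
       else if i = m \<and> j = n then swap_sides S {L} {T} F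
       else F)"

definition squares_of_parity :: "nat \<Rightarrow> nat \<Rightarrow> bool \<Rightarrow> (nat \<times> nat) list" where
  "squares_of_parity m n ev = [(i,j). i \<leftarrow> [0..<m+1], j \<leftarrow> [0..<n+1], even (i+j) = ev]"

definition gyration :: "nat \<Rightarrow> nat \<Rightarrow> (nat \<times> nat) set set \<Rightarrow> (nat \<times> nat) set set" where
  "gyration m n F =
     fold (local_action m n) (squares_of_parity m n False)
       (fold (local_action m n) (squares_of_parity m n True) F)"

end

theory Submission
  imports Defs "HOL-Combinatorics.Transposition"
begin

text \<open>
  A configuration is encoded by a height function on the squares: heights vanish on the boundary,
  change by at most one between neighbouring squares, and an edge is present exactly when the
  height step across it disagrees with the checkerboard parity. A height function in turn is an
  order ideal of \<open>P\<^sub>m\<^sub>,\<^sub>n\<close>: the height of \<open>Q\<^sub>i\<^sub>,\<^sub>j\<close> counts the elements \<open>(i - 1, j - 1, k)\<close> of the ideal.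
  The local action at a square raises a local minimum or lowers a local maximum of the height,
  which is exactly toggling the fibre of elements over that square. The squares of one colour carry
  the elements of one rank parity, so gyration becomes the toggle at all even ranks followed by the
  toggle at all odd ranks. Rowmotion is the product of the rank toggles from the top down
  (Cameron and Fon-Der-Flaass), and reordering these commuting toggles as in Striker and Williams
  conjugates it to the product of the two parity toggles. The bijection \<open>\<Phi>\<close> is the height
  encoding followed by this conjugating bijection.
\<close>

section \<open>Toggles and rowmotion in a graded poset\<close>

locale graded_cover =
  fixes P :: "'a set" and cov :: "('a \<times> 'a) set" and rk :: "'a \<Rightarrow> nat"
  assumes cover_in_carrier: "(y, x) \<in> cov \<Longrightarrow> x \<in> P \<and> y \<in> P"
    and rank_cover: "(y, x) \<in> cov \<Longrightarrow> rk y = Suc (rk x)"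
begin

definition ideals :: "'a set set" where
  "ideals = {X. X \<subseteq> P \<and> (\<forall>x y. x \<in> X \<longrightarrow> (y, x) \<in> cov \<longrightarrow> y \<in> X)}"

definition row :: "'a set \<Rightarrow> 'a set" where
  "row X = {y. \<exists>z \<in> P - X. (\<forall>w \<in> P - X. (w, z) \<in> cov\<^sup>* \<longrightarrow> w = z) \<and> (y, z) \<in> cov\<^sup>*}"

definition in_toggle :: "'a \<Rightarrow> 'a set \<Rightarrow> bool" where
  "in_toggle x Y \<longleftrightarrow> (x \<in> Y \<and> (\<exists>u. (x, u) \<in> cov \<and> u \<in> Y)) \<or> (x \<notin> Y \<and> (\<forall>w. (w, x) \<in> cov \<longrightarrow> w \<in> Y))"

text \<open>Toggling all elements of \<open>S\<close> at once: \<open>x \<in> S\<close> is added or removed whenever the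
  result is still an ideal, and \<open>in_toggle x Y\<close> says whether \<open>x\<close> ends up in the result.
  This is the composite of the single toggles when no two elements of \<open>S\<close> form a cover.\<close>
definition toggle :: "'a set \<Rightarrow> 'a set \<Rightarrow> 'a set" where
  "toggle S Y = (Y - S) \<union> {x \<in> S \<inter> P. in_toggle x Y}"

definition cover_free :: "'a set \<Rightarrow> 'a set \<Rightarrow> bool" where
  "cover_free A B \<longleftrightarrow> (\<forall>a\<in>A. \<forall>b\<in>B. (a, b) \<notin> cov \<and> (b, a) \<notin> cov)"

lemma toggle_empty [simp]: "toggle {} Y = Y"
  by (auto simp: toggle_def)

lemma toggle_outside: "x \<notin> S \<Longrightarrow> x \<in> toggle S Y \<longleftrightarrow> x \<in> Y"
  by (auto simp: toggle_def)

lemma toggle_inside: "x \<in> S \<Longrightarrow> x \<in> toggle S Y \<longleftrightarrow> x \<in> P \<and> in_toggle x Y"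
  by (auto simp: toggle_def)

lemma cover_free_if_ranks:
  assumes "\<And>a b. a \<in> A \<Longrightarrow> b \<in> B \<Longrightarrow> rk a \<noteq> Suc (rk b) \<and> rk b \<noteq> Suc (rk a)"
  shows "cover_free A B"
  using assms rank_cover unfolding cover_free_def by metis

lemma cover_free_rank_parity:
  assumes "\<forall>a \<in> A. even (rk a) = e" "\<forall>b \<in> B. even (rk b) = e"
  shows "cover_free A B"
proof (rule cover_free_if_ranks)
  fix a b assume "a \<in> A" "b \<in> B"
  then have "even (rk a) = even (rk b)" using assms by simp
  then show "rk a \<noteq> Suc (rk b) \<and> rk b \<noteq> Suc (rk a)" by auto
qed

lemma toggle_Un:
  assumes "A \<inter> B = {}" "cover_free A B"
  shows "toggle (A \<union> B) Y = toggle A (toggle B Y)"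
proof (rule set_eqI)
  fix x
  have "in_toggle x (toggle B Y) \<longleftrightarrow> in_toggle x Y" if "x \<in> A"
  proof -
    have "x \<notin> B" "\<forall>u. (x, u) \<in> cov \<longrightarrow> u \<notin> B" "\<forall>w. (w, x) \<in> cov \<longrightarrow> w \<notin> B"
      using that assms unfolding cover_free_def by blast+
    then show ?thesis
      unfolding in_toggle_def by (metis toggle_outside)
  qed
  then show "x \<in> toggle (A \<union> B) Y \<longleftrightarrow> x \<in> toggle A (toggle B Y)"
    using assms(1) by (cases "x \<in> A"; cases "x \<in> B") (auto simp: toggle_inside toggle_outside)
qed

lemma toggle_commute:
  assumes "A \<inter> B = {}" "cover_free A B"
  shows "toggle A (toggle B Y) = toggle B (toggle A Y)"
proof -
  have "cover_free B A" using assms(2) by (auto simp: cover_free_def)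
  then show ?thesis
    using toggle_Un[OF assms] toggle_Un[of B A Y] assms(1) by (simp add: Un_commute Int_commute)
qed

lemma ideal_cover: "X \<in> ideals \<Longrightarrow> x \<in> X \<Longrightarrow> (y, x) \<in> cov \<Longrightarrow> y \<in> X"
  by (auto simp: ideals_def)

lemma ideal_rtrancl:
  assumes "X \<in> ideals" "(y, x) \<in> cov\<^sup>*" "x \<in> X"
  shows "y \<in> X"
  using assms(2,3) by (induction rule: converse_rtrancl_induct) (auto dest: ideal_cover[OF assms(1)])

lemma toggle_ideal:
  assumes Y: "Y \<in> ideals" and S: "cover_free S S"
  shows "toggle S Y \<in> ideals"
  unfolding ideals_def
proof (intro CollectI conjI allI impI)
  show "toggle S Y \<subseteq> P"
    using Y by (auto simp: toggle_def ideals_def)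
next
  fix x w assume x: "x \<in> toggle S Y" and c: "(w, x) \<in> cov"
  have "w \<in> P" using cover_in_carrier[OF c] by blast
  show "w \<in> toggle S Y"
  proof (cases "x \<in> S")
    case False
    then have "x \<in> Y" "w \<in> Y" using x c Y toggle_outside ideal_cover by blast+
    then show ?thesis
      using c \<open>w \<in> P\<close> by (cases "w \<in> S") (auto simp: toggle_inside toggle_outside in_toggle_def)
  next
    case True
    then have "w \<notin> S" using S c by (auto simp: cover_free_def)
    have "in_toggle x Y" using x True toggle_inside by blast
    then have "w \<in> Y" using Y c ideal_cover unfolding in_toggle_def by blast
    then show ?thesis using \<open>w \<notin> S\<close> toggle_outside by blast
  qed
qed

lemma toggle_toggle:
  assumes Y: "Y \<in> ideals" and S: "cover_free S S"
  shows "toggle S (toggle S Y) = Y"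
proof (rule set_eqI)
  fix x
  show "x \<in> toggle S (toggle S Y) \<longleftrightarrow> x \<in> Y"
  proof (cases "x \<in> S")
    case False then show ?thesis by (simp add: toggle_outside)
  next
    case True
    have "\<forall>u. (x, u) \<in> cov \<or> (u, x) \<in> cov \<longrightarrow> (u \<in> toggle S Y \<longleftrightarrow> u \<in> Y)"
      using S True toggle_outside unfolding cover_free_def by metis
    then show ?thesis
      using True Y ideal_cover unfolding toggle_inside[OF True] in_toggle_def ideals_def by blast
  qed
qed

lemma bij_betw_toggle:
  assumes "cover_free S S"
  shows "bij_betw (toggle S) ideals ideals"
  by (rule bij_betw_byWitness[where f' = "toggle S"]) (use assms toggle_ideal toggle_toggle in auto)

lemma trancl_rank: "(y, x) \<in> cov\<^sup>+ \<Longrightarrow> rk x < rk y"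
  by (induction rule: trancl_induct) (auto dest: rank_cover)

lemma rtrancl_carrier: "(y, x) \<in> cov\<^sup>* \<Longrightarrow> x \<in> P \<Longrightarrow> y \<in> P"
  by (induction rule: converse_rtrancl_induct) (auto dest: cover_in_carrier)

lemma row_ideal: "row X \<in> ideals"
  unfolding ideals_def row_def
  by (auto intro: rtrancl_carrier converse_rtrancl_into_rtrancl)

lemma below_row:
  assumes "u \<in> row X" and c: "(x, u) \<in> cov"
  shows "x \<in> X"
proof (rule ccontr)
  assume "x \<notin> X"
  obtain z where z: "z \<in> P - X" "\<forall>w \<in> P - X. (w, z) \<in> cov\<^sup>* \<longrightarrow> w = z" "(u, z) \<in> cov\<^sup>*"
    using assms(1) by (auto simp: row_def)
  have "(x, z) \<in> cov\<^sup>+" using c z(3) by (rule rtrancl_into_trancl2)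
  moreover have "x \<in> P" using cover_in_carrier[OF c] by blast
  ultimately have "x = z" using z(2) \<open>x \<notin> X\<close> by (blast dest: trancl_into_rtrancl)
  with \<open>(x, z) \<in> cov\<^sup>+\<close> show False using trancl_rank by fastforce
qed

lemma row_if_addable:
  assumes X: "X \<in> ideals" and "x \<in> P" "x \<notin> X" and lower: "\<forall>w. (w, x) \<in> cov \<longrightarrow> w \<in> X"
  shows "x \<in> row X"
proof -
  have "w = x" if w: "w \<in> P - X" "(w, x) \<in> cov\<^sup>*" for w
  proof (rule ccontr)
    assume "w \<noteq> x"
    then obtain v where "(w, v) \<in> cov\<^sup>*" "(v, x) \<in> cov"
      using w(2) by (metis rtranclE)
    then have "w \<in> X" using lower ideal_rtrancl[OF X] by blast
    then show False using w(1) by blast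
  qed
  then show ?thesis using assms(2,3) by (auto simp: row_def)
qed

lemma mem_row:
  assumes X: "X \<in> ideals" and "x \<in> P"
  shows "x \<in> row X \<longleftrightarrow> (x \<notin> X \<and> (\<forall>w. (w, x) \<in> cov \<longrightarrow> w \<in> X)) \<or> (\<exists>u. (x, u) \<in> cov \<and> u \<in> row X)"
proof
  assume "x \<in> row X"
  then obtain z where z: "z \<in> P - X" "\<forall>w \<in> P - X. (w, z) \<in> cov\<^sup>* \<longrightarrow> w = z" "(x, z) \<in> cov\<^sup>*"
    by (auto simp: row_def)
  show "(x \<notin> X \<and> (\<forall>w. (w, x) \<in> cov \<longrightarrow> w \<in> X)) \<or> (\<exists>u. (x, u) \<in> cov \<and> u \<in> row X)"
  proof (cases "x = z")
    case True
    have "w \<in> X" if c: "(w, x) \<in> cov" for w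
    proof (rule ccontr)
      assume "w \<notin> X"
      then have "w = z" using z(2) c True cover_in_carrier[OF c] by blast
      then show False using c True rank_cover by fastforce
    qed
    then show ?thesis using z(1) True by blast
  next
    case False
    then obtain u where "(x, u) \<in> cov" "(u, z) \<in> cov\<^sup>*"
      using z(3) by (metis converse_rtranclE)
    then show ?thesis using z(1,2) by (auto simp: row_def)
  qed
next
  assume "(x \<notin> X \<and> (\<forall>w. (w, x) \<in> cov \<longrightarrow> w \<in> X)) \<or> (\<exists>u. (x, u) \<in> cov \<and> u \<in> row X)"
  then show "x \<in> row X"
    using row_if_addable[OF X \<open>x \<in> P\<close>] ideal_cover[OF row_ideal] by blast
qed

definition rank_toggles :: "nat list \<Rightarrow> 'a set \<Rightarrow> 'a set" where
  "rank_toggles rs = fold (\<lambda>r. toggle {x \<in> P. rk x = r}) rs"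

lemma rank_toggles_upt:
  assumes X: "X \<in> ideals"
  shows "rank_toggles [0..<t] X = {x \<in> X. t \<le> rk x} \<union> {x \<in> row X. rk x < t}"
proof (induction t)
  case 0
  then show ?case by (simp add: rank_toggles_def)
next
  case (Suc t)
  let ?Y = "rank_toggles [0..<t] X"
  have XP: "X \<subseteq> P" "row X \<subseteq> P" using X row_ideal by (auto simp: ideals_def)
  have step: "rank_toggles [0..<Suc t] X = toggle {x \<in> P. rk x = t} ?Y"
    by (simp add: rank_toggles_def)
  have rank_t: "x \<in> toggle {x \<in> P. rk x = t} ?Y \<longleftrightarrow> x \<in> row X" if "x \<in> P" "rk x = t" for x
  proof -
    have "in_toggle x ?Y \<longleftrightarrow> (x \<in> X \<and> (\<exists>u. (x, u) \<in> cov \<and> u \<in> row X)) \<or>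
        (x \<notin> X \<and> (\<forall>w. (w, x) \<in> cov \<longrightarrow> w \<in> X))"
      unfolding in_toggle_def Suc using that rank_cover by fastforce
    also have "\<dots> \<longleftrightarrow> x \<in> row X"
      using mem_row[OF X \<open>x \<in> P\<close>] below_row by blast
    finally show ?thesis using that by (simp add: toggle_inside)
  qed
  show ?case
  proof (rule set_eqI)
    fix x
    show "x \<in> rank_toggles [0..<Suc t] X \<longleftrightarrow> x \<in> {x \<in> X. Suc t \<le> rk x} \<union> {x \<in> row X. rk x < Suc t}"
      unfolding step using rank_t[of x] Suc XP
      by (cases "x \<in> P \<and> rk x = t") (auto simp: toggle_outside)
  qed
qed

lemma row_eq_rank_toggles:
  assumes "X \<in> ideals" "\<forall>x \<in> P. rk x \<le> R"
  shows "row X = rank_toggles [0..<Suc R] X"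
  using assms row_ideal unfolding rank_toggles_upt[OF assms(1)] ideals_def by fastforce

definition parity_toggles :: "nat \<Rightarrow> 'a set \<Rightarrow> 'a set" where
  "parity_toggles t =
     toggle {x \<in> P. rk x \<le> t \<and> odd (rk x)} \<circ> toggle {x \<in> P. rk x \<le> t \<and> even (rk x)}"

text \<open>The ranks up to \<open>t\<close> are toggled by parity, the remaining ones one at a time:
  \<open>t = 0\<close> gives rowmotion and \<open>t = R\<close> the product of the two parity toggles.\<close>
definition staged_toggles :: "nat \<Rightarrow> nat \<Rightarrow> 'a set \<Rightarrow> 'a set" where
  "staged_toggles R t = rank_toggles [Suc t..<Suc R] \<circ> parity_toggles t"

lemma bij_betw_parity_toggles: "bij_betw (parity_toggles t) ideals ideals"
  unfolding parity_toggles_def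
  by (intro bij_betw_trans[OF bij_betw_toggle bij_betw_toggle] cover_free_if_ranks) auto

lemma rank_toggles_toggle:
  assumes "\<And>r a. r \<in> set rs \<Longrightarrow> a \<in> A \<Longrightarrow> rk a \<noteq> r \<and> rk a \<noteq> Suc r \<and> r \<noteq> Suc (rk a)"
  shows "rank_toggles rs (toggle A Y) = toggle A (rank_toggles rs Y)"
  using assms
proof (induction rs arbitrary: Y)
  case Nil
  then show ?case by (simp add: rank_toggles_def)
next
  case (Cons r rs)
  have "toggle {x \<in> P. rk x = r} (toggle A Y) = toggle A (toggle {x \<in> P. rk x = r} Y)"
    by (rule toggle_commute) (use Cons.prems in \<open>auto intro!: cover_free_if_ranks\<close>)
  then show ?case using Cons by (simp add: rank_toggles_def)
qed

lemma staged_toggles_0: "staged_toggles R 0 = rank_toggles [0..<Suc R]"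
proof -
  have "{x \<in> P. rk x \<le> 0 \<and> odd (rk x)} = {}"
    and rank_0: "{x \<in> P. rk x \<le> 0 \<and> even (rk x)} = {x \<in> P. rk x = 0}" by (auto elim: oddE)
  then have "parity_toggles 0 = toggle {x \<in> P. rk x = 0}"
    unfolding parity_toggles_def by (simp only: rank_0) (simp add: fun_eq_iff)
  moreover have "[0..<Suc R] = 0 # [Suc 0..<Suc R]" by (simp add: upt_conv_Cons)
  ultimately show ?thesis by (simp add: staged_toggles_def rank_toggles_def)
qed

lemma staged_toggles_top:
  assumes "\<forall>x \<in> P. rk x \<le> R"
  shows "staged_toggles R R = toggle {x \<in> P. odd (rk x)} \<circ> toggle {x \<in> P. even (rk x)}"
proof -
  have "{x \<in> P. rk x \<le> R \<and> odd (rk x)} = {x \<in> P. odd (rk x)}"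
    "{x \<in> P. rk x \<le> R \<and> even (rk x)} = {x \<in> P. even (rk x)}" using assms by blast+
  then show ?thesis by (simp add: staged_toggles_def parity_toggles_def rank_toggles_def)
qed

lemma staged_toggles_Suc_odd:
  assumes "Suc t \<le> R" "odd (Suc t)"
  shows "staged_toggles R (Suc t) = staged_toggles R t"
proof -
  have upt: "[Suc t..<Suc R] = Suc t # [Suc (Suc t)..<Suc R]"
    using assms by (simp add: upt_conv_Cons)
  have odd_Suc: "{x \<in> P. rk x \<le> Suc t \<and> odd (rk x)} =
      {x \<in> P. rk x = Suc t} \<union> {x \<in> P. rk x \<le> t \<and> odd (rk x)}"
    and even_Suc: "{x \<in> P. rk x \<le> Suc t \<and> even (rk x)} = {x \<in> P. rk x \<le> t \<and> even (rk x)}"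
    using assms by (auto simp: le_Suc_eq)
  have "toggle {x \<in> P. rk x \<le> Suc t \<and> odd (rk x)} Y =
      toggle {x \<in> P. rk x = Suc t} (toggle {x \<in> P. rk x \<le> t \<and> odd (rk x)} Y)" for Y
    unfolding odd_Suc by (rule toggle_Un) (use assms in \<open>auto intro!: cover_free_if_ranks\<close>)
  then show ?thesis
    unfolding staged_toggles_def parity_toggles_def upt even_Suc
    by (simp add: rank_toggles_def fun_eq_iff)
qed

lemma staged_toggles_Suc_even:
  assumes "Suc t \<le> R" "even (Suc t)"
  shows "staged_toggles R (Suc t) (parity_toggles t Y) = parity_toggles t (staged_toggles R t Y)"
proof -
  let ?U = "rank_toggles [Suc (Suc t)..<Suc R]"
  have upt: "[Suc t..<Suc R] = Suc t # [Suc (Suc t)..<Suc R]"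
    using assms by (simp add: upt_conv_Cons)
  have even_Suc: "{x \<in> P. rk x \<le> Suc t \<and> even (rk x)} =
      {x \<in> P. rk x \<le> t \<and> even (rk x)} \<union> {x \<in> P. rk x = Suc t}"
    and odd_Suc: "{x \<in> P. rk x \<le> Suc t \<and> odd (rk x)} = {x \<in> P. rk x \<le> t \<and> odd (rk x)}"
    using assms by (auto simp: le_Suc_eq)
  have "toggle {x \<in> P. rk x \<le> Suc t \<and> even (rk x)} Z =
      toggle {x \<in> P. rk x \<le> t \<and> even (rk x)} (toggle {x \<in> P. rk x = Suc t} Z)" for Z
    unfolding even_Suc by (rule toggle_Un) (use assms in \<open>auto intro!: cover_free_if_ranks\<close>)
  then have split: "parity_toggles (Suc t) = parity_toggles t \<circ> toggle {x \<in> P. rk x = Suc t}"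
    unfolding parity_toggles_def odd_Suc by (simp add: fun_eq_iff)
  have "?U (toggle {x \<in> P. rk x \<le> t \<and> even (rk x)} Z) = toggle {x \<in> P. rk x \<le> t \<and> even (rk x)} (?U Z)"
    "?U (toggle {x \<in> P. rk x \<le> t \<and> odd (rk x)} Z) = toggle {x \<in> P. rk x \<le> t \<and> odd (rk x)} (?U Z)"
    for Z by (rule rank_toggles_toggle; auto)+
  then have commute: "?U (parity_toggles t Z) = parity_toggles t (?U Z)" for Z
    by (simp only: parity_toggles_def comp_apply)
  have "rank_toggles [Suc t..<Suc R] Z = ?U (toggle {x \<in> P. rk x = Suc t} Z)" for Z
    unfolding upt rank_toggles_def by simp
  then show ?thesis
    unfolding staged_toggles_def split comp_apply commute by simp
qed

lemma staged_toggles_conj: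
  assumes "t \<le> R"
  shows "\<exists>C. bij_betw C ideals ideals \<and> (\<forall>Y. staged_toggles R t (C Y) = C (staged_toggles R 0 Y))"
  using assms
proof (induction t)
  case 0
  show ?case by (intro exI[of _ id]) (simp add: bij_betw_def)
next
  case (Suc t)
  then obtain C where C: "bij_betw C ideals ideals"
    "\<forall>Y. staged_toggles R t (C Y) = C (staged_toggles R 0 Y)" by auto
  show ?case
  proof (cases "odd (Suc t)")
    case True
    then show ?thesis using C staged_toggles_Suc_odd[OF Suc.prems True] by metis
  next
    case False
    have "bij_betw (parity_toggles t \<circ> C) ideals ideals"
      using C(1) bij_betw_parity_toggles by (rule bij_betw_trans)
    moreover have "staged_toggles R (Suc t) ((parity_toggles t \<circ> C) Y) =
        (parity_toggles t \<circ> C) (staged_toggles R 0 Y)" for Y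
      using staged_toggles_Suc_even[OF Suc.prems, of "C Y"] False C(2) by simp
    ultimately show ?thesis by blast
  qed
qed

theorem row_conj_parity_toggles:
  assumes "\<forall>x \<in> P. rk x \<le> R"
  shows "\<exists>C. bij_betw C ideals ideals \<and>
    (\<forall>Y \<in> ideals. C (toggle {x \<in> P. odd (rk x)} (toggle {x \<in> P. even (rk x)} Y)) = row (C Y))"
proof -
  obtain C where C: "bij_betw C ideals ideals"
    "\<And>Y. staged_toggles R R (C Y) = C (staged_toggles R 0 Y)"
    using staged_toggles_conj[of R R] by auto
  define D where "D = inv_into ideals C"
  have D: "bij_betw D ideals ideals" unfolding D_def by (rule bij_betw_inv_into[OF C(1)])
  have "D (toggle {x \<in> P. odd (rk x)} (toggle {x \<in> P. even (rk x)} Y)) = row (D Y)"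
    if Y: "Y \<in> ideals" for Y
  proof -
    have DY: "D Y \<in> ideals" "C (D Y) = Y"
      using D C(1) Y unfolding D_def by (auto simp: bij_betw_def f_inv_into_f)
    have "toggle {x \<in> P. odd (rk x)} (toggle {x \<in> P. even (rk x)} Y) = C (row (D Y))"
      using C(2)[of "D Y"] DY staged_toggles_top[OF assms] staged_toggles_0
        row_eq_rank_toggles[OF _ assms] by simp
    then show ?thesis
      using C(1) row_ideal unfolding D_def by (simp add: bij_betw_def inv_into_f_f)
  qed
  then show ?thesis using D by blast
qed

end

section \<open>The poset \<open>P\<^sub>m\<^sub>,\<^sub>n\<close> and height functions\<close>

definition Pmn_rank :: "int \<times> int \<times> int \<Rightarrow> nat" where
  "Pmn_rank x = (case x of (i, j, k) \<Rightarrow> nat (i + j - 2 * k))"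

lemma cover_rel_rank: "(y, x) \<in> cover_rel m n \<Longrightarrow> Pmn_rank y = Suc (Pmn_rank x)"
  by (auto simp: cover_rel_def Pmn_def Pmn_rank_def split: prod.splits)

interpretation Pmn: graded_cover "Pmn m n" "cover_rel m n" Pmn_rank for m n
  by unfold_locales (auto simp: cover_rel_def cover_rel_rank)

lemma order_ideals_eq: "order_ideals m n = Pmn.ideals m n"
proof (intro set_eqI iffI)
  fix X assume X: "X \<in> Pmn.ideals m n"
  have "y \<in> X" if "x \<in> X" "P_le m n y x" for x y
    using Pmn.ideal_rtrancl[OF X] that unfolding P_le_def by blast
  then show "X \<in> order_ideals m n"
    using X by (simp add: order_ideals_def Pmn.ideals_def)
next
  fix X assume X: "X \<in> order_ideals m n"
  have "y \<in> X" if "x \<in> X" "(y, x) \<in> cover_rel m n" for x y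
    using X that Pmn.cover_in_carrier[OF that(2)] r_into_rtrancl[OF that(2)]
    unfolding order_ideals_def P_le_def by blast
  then show "X \<in> Pmn.ideals m n"
    using X by (simp add: order_ideals_def Pmn.ideals_def)
qed

lemma rowmotion_eq: "rowmotion m n X = Pmn.row m n X"
proof -
  have le: "P_le m n y z \<longleftrightarrow> (y, z) \<in> (cover_rel m n)\<^sup>*" if "z \<in> Pmn m n" for y z
    using that Pmn.rtrancl_carrier[of y z] unfolding P_le_def by blast
  show ?thesis
    unfolding rowmotion_def Pmn.row_def minimal_elems_def using le by blast
qed

lemma Pmn_rank_le: "x \<in> Pmn m n \<Longrightarrow> Pmn_rank x \<le> m + n"
  by (auto simp: Pmn_def Pmn_rank_def)

lemma mem_Pmn_nat: "(int a, int b, int k) \<in> Pmn m n \<longleftrightarrow> k \<le> a \<and> k \<le> b \<and> a < m \<and> b < n"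
  by (auto simp: Pmn_def)

lemma Pmn_nat_coords: "x \<in> Pmn m n \<Longrightarrow> \<exists>a b k. x = (int a, int b, int k)"
  by (cases x) (auto simp: Pmn_def intro!: exI[of _ "nat _"])

lemma cover_rel_nat:
  "((int a', int b', int k'), (int a, int b, int k)) \<in> cover_rel m n \<longleftrightarrow>
    (int a', int b', int k') \<in> Pmn m n \<and> (int a, int b, int k) \<in> Pmn m n \<and>
    ((a' = Suc a \<and> b' = b \<and> k' = k) \<or> (a' = a \<and> b' = Suc b \<and> k' = k) \<or>
     (Suc a' = a \<and> b' = b \<and> Suc k' = k) \<or> (a' = a \<and> Suc b' = b \<and> Suc k' = k))"
  unfolding cover_rel_def by auto

definition height_fn :: "nat \<Rightarrow> nat \<Rightarrow> (nat \<Rightarrow> nat \<Rightarrow> nat) \<Rightarrow> bool" where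
  "height_fn m n h \<longleftrightarrow> (\<forall>j \<le> n. h 0 j = 0) \<and> (\<forall>i \<le> m. h i 0 = 0)
     \<and> (\<forall>i < m. \<forall>j \<le> n. h i j \<le> h (Suc i) j \<and> h (Suc i) j \<le> Suc (h i j))
     \<and> (\<forall>i \<le> m. \<forall>j < n. h i j \<le> h i (Suc j) \<and> h i (Suc j) \<le> Suc (h i j))"

lemma height_fn_col:
  "height_fn m n h \<Longrightarrow> i < m \<Longrightarrow> j \<le> n \<Longrightarrow> h i j \<le> h (Suc i) j \<and> h (Suc i) j \<le> Suc (h i j)"
  by (simp add: height_fn_def)

lemma height_fn_row:
  "height_fn m n h \<Longrightarrow> i \<le> m \<Longrightarrow> j < n \<Longrightarrow> h i j \<le> h i (Suc j) \<and> h i (Suc j) \<le> Suc (h i j)"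
  by (simp add: height_fn_def)

lemma height_fn_le:
  assumes h: "height_fn m n h" and "i \<le> m" "j \<le> n"
  shows "h i j \<le> i" "h i j \<le> j"
proof -
  show "h i j \<le> i" using assms(2)
  proof (induction i)
    case (Suc i)
    then show ?case using height_fn_col[OF h, of i j] assms(3) by simp
  qed (use h assms(3) in \<open>simp add: height_fn_def\<close>)
  show "h i j \<le> j" using assms(3)
  proof (induction j)
    case (Suc j)
    then show ?case using height_fn_row[OF h, of i j] assms(2) by simp
  qed (use h assms(2) in \<open>simp add: height_fn_def\<close>)
qed

text \<open>The element \<open>(a, b, k)\<close> lies above the square \<open>Q\<^bsub>a+1,b+1\<^esub>\<close>; an ideal contains exactly
  the lowest \<open>h (a+1) (b+1)\<close> of these elements.\<close>
definition ideal_of_height :: "nat \<Rightarrow> nat \<Rightarrow> (nat \<Rightarrow> nat \<Rightarrow> nat) \<Rightarrow> (int \<times> int \<times> int) set" where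
  "ideal_of_height m n h =
     {x \<in> Pmn m n. case x of (a, b, k) \<Rightarrow> k < int (h (Suc (nat a)) (Suc (nat b)))}"

definition height_of_ideal :: "(int \<times> int \<times> int) set \<Rightarrow> nat \<Rightarrow> nat \<Rightarrow> nat" where
  "height_of_ideal X i j = card {k. (int i - 1, int j - 1, int k) \<in> X}"

lemma mem_ideal_of_height:
  "(int a, int b, int k) \<in> ideal_of_height m n h \<longleftrightarrow>
     k \<le> a \<and> k \<le> b \<and> a < m \<and> b < n \<and> k < h (Suc a) (Suc b)"
  by (auto simp: ideal_of_height_def mem_Pmn_nat)

lemma ideal_of_height_subset: "ideal_of_height m n h \<subseteq> Pmn m n"
  by (auto simp: ideal_of_height_def)

lemma ideal_of_height_cong:
  assumes "\<And>i j. 1 \<le> i \<Longrightarrow> i \<le> m \<Longrightarrow> 1 \<le> j \<Longrightarrow> j \<le> n \<Longrightarrow> h i j = h' i j"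
  shows "ideal_of_height m n h = ideal_of_height m n h'"
proof (rule set_eqI)
  fix x
  show "x \<in> ideal_of_height m n h \<longleftrightarrow> x \<in> ideal_of_height m n h'"
  proof (cases "x \<in> Pmn m n")
    case True
    then obtain a b k where "x = (int a, int b, int k)" using Pmn_nat_coords by blast
    then show ?thesis using assms[of "Suc a" "Suc b"] by (auto simp: mem_ideal_of_height)
  next
    case False
    then show ?thesis using ideal_of_height_subset by blast
  qed
qed

lemma ideal_of_height_ideal:
  assumes h: "height_fn m n h"
  shows "ideal_of_height m n h \<in> Pmn.ideals m n"
  unfolding Pmn.ideals_def
proof (intro CollectI conjI allI impI)
  show "ideal_of_height m n h \<subseteq> Pmn m n" by (rule ideal_of_height_subset)
next
  fix x w assume x: "x \<in> ideal_of_height m n h" and c: "(w, x) \<in> cover_rel m n"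
  obtain a b k where xe: "x = (int a, int b, int k)"
    using Pmn_nat_coords Pmn.cover_in_carrier[OF c] by blast
  obtain a' b' k' where we: "w = (int a', int b', int k')"
    using Pmn_nat_coords Pmn.cover_in_carrier[OF c] by blast
  have c': "((int a', int b', int k'), (int a, int b, int k)) \<in> cover_rel m n"
    using c xe we by simp
  have x': "k < h (Suc a) (Suc b)" "a < m" "b < n" using x xe mem_ideal_of_height by auto
  have w': "k' \<le> a'" "k' \<le> b'" "a' < m" "b' < n"
    using c' unfolding cover_rel_nat mem_Pmn_nat by auto
  have "k' < h (Suc a') (Suc b')"
    using c' unfolding cover_rel_nat
  proof (elim conjE disjE)
    assume "a' = Suc a" "b' = b" "k' = k"
    then show ?thesis using height_fn_col[OF h, of "Suc a" "Suc b"] x' w' by simp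
  next
    assume "a' = a" "b' = Suc b" "k' = k"
    then show ?thesis using height_fn_row[OF h, of "Suc a" "Suc b"] x' w' by simp
  next
    assume "Suc a' = a" "b' = b" "Suc k' = k"
    then show ?thesis using height_fn_col[OF h, of a "Suc b"] x' w' by simp
  next
    assume "a' = a" "Suc b' = b" "Suc k' = k"
    then show ?thesis using height_fn_row[OF h, of "Suc a" b] x' w' by simp
  qed
  then show "w \<in> ideal_of_height m n h" using we w' mem_ideal_of_height by simp
qed

lemma height_eq_if_ideal_of_height_eq:
  assumes h: "height_fn m n h" and h': "height_fn m n h'"
    and eq: "ideal_of_height m n h = ideal_of_height m n h'" and "i \<le> m" "j \<le> n"
  shows "h i j = h' i j"
proof (cases "i = 0 \<or> j = 0")
  case True
  then show ?thesis using h h' assms(4,5) by (auto simp: height_fn_def)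
next
  case False
  then obtain a b where ab: "i = Suc a" "j = Suc b" by (cases i; cases j) auto
  have "k < g i j \<longleftrightarrow> (int a, int b, int k) \<in> ideal_of_height m n g"
    if "height_fn m n g" for g k
    using height_fn_le[OF that assms(4,5)] ab assms(4,5) by (auto simp: mem_ideal_of_height)
  then have "k < h i j \<longleftrightarrow> k < h' i j" for k using h h' eq by blast
  then show ?thesis by (metis less_irrefl nat_neq_iff)
qed

lemma ideal_mem_Pmn: "X \<in> Pmn.ideals m n \<Longrightarrow> x \<in> X \<Longrightarrow> x \<in> Pmn m n"
  by (auto simp: Pmn.ideals_def)

lemma ideal_step_fst:
  assumes X: "X \<in> Pmn.ideals m n" and x: "(int a, int b, int k) \<in> X" and "Suc a < m"
  shows "(int (Suc a), int b, int k) \<in> X"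
proof -
  have "((int (Suc a), int b, int k), (int a, int b, int k)) \<in> cover_rel m n"
    using ideal_mem_Pmn[OF X x] assms(3) unfolding cover_rel_nat mem_Pmn_nat by simp
  then show ?thesis using Pmn.ideal_cover[OF X x] by blast
qed

lemma ideal_step_snd:
  assumes X: "X \<in> Pmn.ideals m n" and x: "(int a, int b, int k) \<in> X" and "Suc b < n"
  shows "(int a, int (Suc b), int k) \<in> X"
proof -
  have "((int a, int (Suc b), int k), (int a, int b, int k)) \<in> cover_rel m n"
    using ideal_mem_Pmn[OF X x] assms(3) unfolding cover_rel_nat mem_Pmn_nat by simp
  then show ?thesis using Pmn.ideal_cover[OF X x] by blast
qed

lemma ideal_diag_fst:
  assumes X: "X \<in> Pmn.ideals m n" and x: "(int (Suc a), int b, int (Suc k)) \<in> X"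
  shows "(int a, int b, int k) \<in> X"
proof -
  have "((int a, int b, int k), (int (Suc a), int b, int (Suc k))) \<in> cover_rel m n"
    using ideal_mem_Pmn[OF X x] unfolding cover_rel_nat mem_Pmn_nat by simp
  then show ?thesis using Pmn.ideal_cover[OF X x] by blast
qed

lemma ideal_diag_snd:
  assumes X: "X \<in> Pmn.ideals m n" and x: "(int a, int (Suc b), int (Suc k)) \<in> X"
  shows "(int a, int b, int k) \<in> X"
proof -
  have "((int a, int b, int k), (int a, int (Suc b), int (Suc k))) \<in> cover_rel m n"
    using ideal_mem_Pmn[OF X x] unfolding cover_rel_nat mem_Pmn_nat by simp
  then show ?thesis using Pmn.ideal_cover[OF X x] by blast
qed

lemma ideal_fiber_downward:
  assumes X: "X \<in> Pmn.ideals m n" and x: "(int a, int b, int k) \<in> X" and "k' \<le> k"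
  shows "(int a, int b, int k') \<in> X"
  using assms(3) x
proof (induction k)
  case (Suc k)
  have "Suc k \<le> a" "a < m" using ideal_mem_Pmn[OF X Suc.prems(2)] unfolding mem_Pmn_nat by simp_all
  then obtain a0 where a0: "a = Suc a0" by (cases a) auto
  have "(int a0, int b, int k) \<in> X" using ideal_diag_fst[OF X, of a0 b k] Suc.prems(2) a0 by simp
  then have "(int a, int b, int k) \<in> X" using ideal_step_fst[OF X, of a0 b k] \<open>a < m\<close> a0 by simp
  then show ?case
    using Suc.IH Suc.prems by (cases "k' = Suc k") (simp_all add: le_Suc_eq)
qed simp

lemma mem_ideal_iff_height:
  assumes X: "X \<in> Pmn.ideals m n"
  shows "(int a, int b, int k) \<in> X \<longleftrightarrow> k < height_of_ideal X (Suc a) (Suc b)"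
proof -
  let ?S = "{k. (int a, int b, int k) \<in> X}"
  have "?S \<subseteq> {..a}"
  proof
    fix k assume "k \<in> ?S"
    then have "(int a, int b, int k) \<in> Pmn m n" using X unfolding Pmn.ideals_def by blast
    then show "k \<in> {..a}" by (simp add: mem_Pmn_nat)
  qed
  then have fin: "finite ?S" using finite_subset by blast
  obtain N where N: "?S = {..<N}"
  proof (cases "?S = {}")
    case False
    have M: "Max ?S \<in> ?S" using Max_in[OF fin False] .
    have "?S = {..<Suc (Max ?S)}"
    proof (intro set_eqI iffI)
      fix k assume "k \<in> ?S"
      then have "k \<le> Max ?S" using Max_ge[OF fin] by blast
      then show "k \<in> {..<Suc (Max ?S)}" by simp
    next
      fix k assume "k \<in> {..<Suc (Max ?S)}"
      then have "k \<le> Max ?S" by simp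
      moreover have "(int a, int b, int (Max ?S)) \<in> X" using M by blast
      ultimately show "k \<in> ?S" using ideal_fiber_downward[OF X] by blast
    qed
    then show ?thesis by (rule that)
  qed (rule that[of 0], simp)
  have "height_of_ideal X (Suc a) (Suc b) = N" using N by (simp add: height_of_ideal_def)
  moreover have "(int a, int b, int k) \<in> X \<longleftrightarrow> k < N" using N unfolding set_eq_iff by simp
  ultimately show ?thesis by simp
qed

lemma height_of_ideal_boundary:
  assumes X: "X \<in> Pmn.ideals m n"
  shows "height_of_ideal X 0 j = 0" "height_of_ideal X i 0 = 0"
proof -
  have "(int 0 - 1, c, d) \<notin> Pmn m n" "(c, int 0 - 1, d) \<notin> Pmn m n" for c d
    by (simp_all add: Pmn_def)
  then have "{k. (int 0 - 1, int j - 1, int k) \<in> X} = {}" "{k. (int i - 1, int 0 - 1, int k) \<in> X} = {}"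
    using ideal_mem_Pmn[OF X] by blast+
  then show "height_of_ideal X 0 j = 0" "height_of_ideal X i 0 = 0"
    by (simp_all add: height_of_ideal_def)
qed

lemma unit_step_by_less:
  fixes x y :: nat
  assumes "\<And>k. k < x \<Longrightarrow> k < y" "\<And>k. Suc k < y \<Longrightarrow> k < x"
  shows "x \<le> y \<and> y \<le> Suc x"
proof -
  have "\<not> y < x" using assms(1)[of y] by blast
  moreover have "\<not> Suc x < y" using assms(2)[of x] by blast
  ultimately show ?thesis by simp
qed

lemma height_fn_height_of_ideal:
  assumes X: "X \<in> Pmn.ideals m n"
  shows "height_fn m n (height_of_ideal X)"
proof -
  let ?H = "height_of_ideal X"
  note mem = mem_ideal_iff_height[OF X] and zero = height_of_ideal_boundary[OF X]
  have col: "?H i j \<le> ?H (Suc i) j \<and> ?H (Suc i) j \<le> Suc (?H i j)" if "i < m" "j = Suc b" for i j b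
  proof (rule unit_step_by_less)
    fix k assume k: "k < ?H i j"
    then obtain a where i: "i = Suc a" using zero by (cases i) auto
    have "(int a, int b, int k) \<in> X" by (subst mem) (use k i \<open>j = Suc b\<close> in simp)
    then have "(int (Suc a), int b, int k) \<in> X"
      using \<open>i < m\<close> i by (intro ideal_step_fst[OF X]) simp_all
    then show "k < ?H (Suc i) j" unfolding i \<open>j = Suc b\<close> by (subst (asm) mem)
  next
    fix k assume k: "Suc k < ?H (Suc i) j"
    have x: "(int i, int b, int (Suc k)) \<in> X" by (subst mem) (use k \<open>j = Suc b\<close> in simp)
    then obtain a where "i = Suc a" using ideal_mem_Pmn[OF X x] unfolding mem_Pmn_nat by (cases i) auto
    then show "k < ?H i j" using ideal_diag_fst[OF X] x mem \<open>j = Suc b\<close> by simp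
  qed
  have row: "?H i j \<le> ?H i (Suc j) \<and> ?H i (Suc j) \<le> Suc (?H i j)" if "i = Suc a" "j < n" for i j a
  proof (rule unit_step_by_less)
    fix k assume k: "k < ?H i j"
    then obtain b where j: "j = Suc b" using zero by (cases j) auto
    have "(int a, int b, int k) \<in> X" by (subst mem) (use k j \<open>i = Suc a\<close> in simp)
    then have "(int a, int (Suc b), int k) \<in> X"
      using \<open>j < n\<close> j by (intro ideal_step_snd[OF X]) simp_all
    then show "k < ?H i (Suc j)" unfolding j \<open>i = Suc a\<close> by (subst (asm) mem)
  next
    fix k assume k: "Suc k < ?H i (Suc j)"
    have x: "(int a, int j, int (Suc k)) \<in> X" by (subst mem) (use k \<open>i = Suc a\<close> in simp)
    then obtain b where "j = Suc b" using ideal_mem_Pmn[OF X x] unfolding mem_Pmn_nat by (cases j) auto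
    then show "k < ?H i j" using ideal_diag_snd[OF X] x mem \<open>i = Suc a\<close> by simp
  qed
  have "?H i j \<le> ?H (Suc i) j \<and> ?H (Suc i) j \<le> Suc (?H i j)" if "i < m" for i j
    using col[OF that] zero by (cases j) auto
  moreover have "?H i j \<le> ?H i (Suc j) \<and> ?H i (Suc j) \<le> Suc (?H i j)" if "j < n" for i j
    using row[OF _ that] zero by (cases i) auto
  ultimately show ?thesis using zero by (simp add: height_fn_def)
qed

lemma ideal_of_height_of_ideal:
  assumes X: "X \<in> Pmn.ideals m n"
  shows "ideal_of_height m n (height_of_ideal X) = X"
proof (rule set_eqI)
  fix x
  have XP: "X \<subseteq> Pmn m n" using X by (simp add: Pmn.ideals_def)
  show "x \<in> ideal_of_height m n (height_of_ideal X) \<longleftrightarrow> x \<in> X"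
  proof (cases "x \<in> Pmn m n")
    case True
    then obtain a b k where "x = (int a, int b, int k)" using Pmn_nat_coords by blast
    then show ?thesis using True mem_ideal_iff_height[OF X, of a b k]
      by (auto simp: mem_ideal_of_height mem_Pmn_nat)
  next
    case False
    then show ?thesis using XP ideal_of_height_subset by blast
  qed
qed

section \<open>Fully-packed loop configurations as height functions\<close>

definition vert_edge :: "nat \<Rightarrow> nat \<Rightarrow> (nat \<times> nat) set" where
  "vert_edge i j = {(i, j), (Suc i, j)}"

definition horiz_edge :: "nat \<Rightarrow> nat \<Rightarrow> (nat \<times> nat) set" where
  "horiz_edge i j = {(i, j), (i, Suc j)}"

lemma vert_edge_eq_iff [simp]: "vert_edge i j = vert_edge i' j' \<longleftrightarrow> i = i' \<and> j = j'"
  by (auto simp: vert_edge_def doubleton_eq_iff)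

lemma horiz_edge_eq_iff [simp]: "horiz_edge i j = horiz_edge i' j' \<longleftrightarrow> i = i' \<and> j = j'"
  by (auto simp: horiz_edge_def doubleton_eq_iff)

lemma vert_edge_neq_horiz_edge [simp]: "vert_edge i j \<noteq> horiz_edge i' j'" "horiz_edge i' j' \<noteq> vert_edge i j"
  by (auto simp: vert_edge_def horiz_edge_def doubleton_eq_iff)

lemma Gedges_eq:
  "Gedges m n = {vert_edge i j | i j. i \<le> m \<and> 1 \<le> j \<and> j \<le> n} \<union>
                {horiz_edge i j | i j. 1 \<le> i \<and> i \<le> m \<and> j \<le> n}"
  by (simp add: Gedges_def vert_edge_def horiz_edge_def)

lemma vert_edge_in_Gedges [simp]: "vert_edge i j \<in> Gedges m n \<longleftrightarrow> i \<le> m \<and> 1 \<le> j \<and> j \<le> n"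
  by (auto simp: Gedges_eq)

lemma horiz_edge_in_Gedges [simp]: "horiz_edge i j \<in> Gedges m n \<longleftrightarrow> 1 \<le> i \<and> i \<le> m \<and> j \<le> n"
  by (auto simp: Gedges_eq)

lemma edges_at_vertex:
  assumes "F \<subseteq> Gedges m n"
  shows "{e \<in> F. (Suc a, Suc b) \<in> e} =
    {vert_edge a (Suc b), vert_edge (Suc a) (Suc b), horiz_edge (Suc a) b, horiz_edge (Suc a) (Suc b)} \<inter> F"
proof (intro set_eqI iffI)
  fix e assume e: "e \<in> {e \<in> F. (Suc a, Suc b) \<in> e}"
  then have "e \<in> Gedges m n" using assms by blast
  then consider i j where "e = vert_edge i j" | i j where "e = horiz_edge i j"
    unfolding Gedges_eq by blast
  then show "e \<in> {vert_edge a (Suc b), vert_edge (Suc a) (Suc b), horiz_edge (Suc a) b, horiz_edge (Suc a) (Suc b)} \<inter> F"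
    by cases (use e in \<open>auto simp: vert_edge_def horiz_edge_def\<close>)
qed (auto simp: vert_edge_def horiz_edge_def)

lemma card_four_Int:
  assumes "distinct [w, x, y, z]"
  shows "card ({w, x, y, z} \<inter> F) = of_bool (w \<in> F) + of_bool (x \<in> F) + of_bool (y \<in> F) + of_bool (z \<in> F)"
proof -
  have "card ({w, x, y, z} \<inter> F) = (\<Sum>a\<in>{w, x, y, z}. of_bool (a \<in> F))"
    by (subst sum_of_bool_eq) auto
  then show ?thesis using assms by simp
qed

lemma PFPL_iff:
  "F \<in> PFPL m n \<longleftrightarrow> F \<subseteq> Gedges m n
     \<and> (\<forall>a < m. \<forall>b < n. of_bool (vert_edge a (Suc b) \<in> F) + of_bool (vert_edge (Suc a) (Suc b) \<in> F)
                        + of_bool (horiz_edge (Suc a) b \<in> F) + of_bool (horiz_edge (Suc a) (Suc b) \<in> F) = (2::nat))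
     \<and> (\<forall>j. 1 \<le> j \<and> j \<le> n \<longrightarrow> (vert_edge 0 j \<in> F \<longleftrightarrow> odd j))
     \<and> (\<forall>i. 1 \<le> i \<and> i \<le> m \<longrightarrow> (horiz_edge i 0 \<in> F \<longleftrightarrow> even i))"
proof (cases "F \<subseteq> Gedges m n")
  case True
  have vertex: "v \<in> Gverts m n \<and> interior m n v \<longleftrightarrow> (\<exists>a b. v = (Suc a, Suc b) \<and> a < m \<and> b < n)" for v
  proof (cases v)
    case (Pair i j)
    have "(\<exists>a b. i = Suc a \<and> j = Suc b \<and> a < m \<and> b < n) \<longleftrightarrow> 1 \<le> i \<and> i \<le> m \<and> 1 \<le> j \<and> j \<le> n"
      by (cases i; cases j) auto
    then show ?thesis using Pair by (auto simp: Gverts_def interior_def)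
  qed
  have "(\<forall>v \<in> Gverts m n. interior m n v \<longrightarrow> card {e \<in> F. v \<in> e} = 2) \<longleftrightarrow>
      (\<forall>a < m. \<forall>b < n. card {e \<in> F. (Suc a, Suc b) \<in> e} = 2)"
  proof (intro iffI allI impI ballI)
    fix a b assume "\<forall>v \<in> Gverts m n. interior m n v \<longrightarrow> card {e \<in> F. v \<in> e} = 2" "a < m" "b < n"
    then show "card {e \<in> F. (Suc a, Suc b) \<in> e} = 2" using vertex[of "(Suc a, Suc b)"] by auto
  next
    fix v assume "\<forall>a < m. \<forall>b < n. card {e \<in> F. (Suc a, Suc b) \<in> e} = 2" "v \<in> Gverts m n" "interior m n v"
    then show "card {e \<in> F. v \<in> e} = 2" using vertex[of v] by auto
  qed
  moreover have "card {e \<in> F. (Suc a, Suc b) \<in> e} =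
      of_bool (vert_edge a (Suc b) \<in> F) + of_bool (vert_edge (Suc a) (Suc b) \<in> F)
      + of_bool (horiz_edge (Suc a) b \<in> F) + of_bool (horiz_edge (Suc a) (Suc b) \<in> F)" for a b
    unfolding edges_at_vertex[OF True] by (rule card_four_Int) simp
  moreover have "{(0, j), (1, j)} = vert_edge 0 j" "{(i, 0), (i, 1)} = horiz_edge i 0" for i j
    by (simp_all add: vert_edge_def horiz_edge_def)
  ultimately show ?thesis
    using True unfolding PFPL_def by simp
qed (simp add: PFPL_def)

lemma PFPL_D:
  assumes "F \<in> PFPL m n"
  shows "F \<subseteq> Gedges m n"
    and "a < m \<Longrightarrow> b < n \<Longrightarrow> of_bool (vert_edge a (Suc b) \<in> F) + of_bool (vert_edge (Suc a) (Suc b) \<in> F)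
           + of_bool (horiz_edge (Suc a) b \<in> F) + of_bool (horiz_edge (Suc a) (Suc b) \<in> F) = (2::nat)"
    and "1 \<le> j \<Longrightarrow> j \<le> n \<Longrightarrow> vert_edge 0 j \<in> F \<longleftrightarrow> odd j"
    and "1 \<le> i \<Longrightarrow> i \<le> m \<Longrightarrow> horiz_edge i 0 \<in> F \<longleftrightarrow> even i"
proof -
  obtain G: "F \<subseteq> Gedges m n"
    and D: "\<forall>a < m. \<forall>b < n. of_bool (vert_edge a (Suc b) \<in> F) + of_bool (vert_edge (Suc a) (Suc b) \<in> F)
             + of_bool (horiz_edge (Suc a) b \<in> F) + of_bool (horiz_edge (Suc a) (Suc b) \<in> F) = (2::nat)"
    and T: "\<forall>j. 1 \<le> j \<and> j \<le> n \<longrightarrow> (vert_edge 0 j \<in> F \<longleftrightarrow> odd j)"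
    and L: "\<forall>i. 1 \<le> i \<and> i \<le> m \<longrightarrow> (horiz_edge i 0 \<in> F \<longleftrightarrow> even i)"
    using assms unfolding PFPL_iff by (elim conjE) (rule that; assumption)
  show "F \<subseteq> Gedges m n" by (rule G)
  show "a < m \<Longrightarrow> b < n \<Longrightarrow> of_bool (vert_edge a (Suc b) \<in> F) + of_bool (vert_edge (Suc a) (Suc b) \<in> F)
           + of_bool (horiz_edge (Suc a) b \<in> F) + of_bool (horiz_edge (Suc a) (Suc b) \<in> F) = (2::nat)"
    using D by blast
  show "1 \<le> j \<Longrightarrow> j \<le> n \<Longrightarrow> vert_edge 0 j \<in> F \<longleftrightarrow> odd j" using T by blast
  show "1 \<le> i \<Longrightarrow> i \<le> m \<Longrightarrow> horiz_edge i 0 \<in> F \<longleftrightarrow> even i" using L by blast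
qed

text \<open>The height rises by one across an edge of the grid exactly when the presence of the
  edge disagrees with the checkerboard pattern of the boundary edges.\<close>
primrec pfpl_height :: "(nat \<times> nat) set set \<Rightarrow> nat \<Rightarrow> nat \<Rightarrow> nat" where
  "pfpl_height F 0 j = 0"
| "pfpl_height F (Suc i) j = pfpl_height F i j + of_bool ((horiz_edge (Suc i) j \<in> F) \<noteq> even (Suc i + j))"

definition pfpl_of_height :: "nat \<Rightarrow> nat \<Rightarrow> (nat \<Rightarrow> nat \<Rightarrow> nat) \<Rightarrow> (nat \<times> nat) set set" where
  "pfpl_of_height m n h =
     {vert_edge i j | i j. i \<le> m \<and> 1 \<le> j \<and> j \<le> n \<and> ((h i j \<noteq> h i (j - 1)) \<noteq> odd (i + j))}
     \<union> {horiz_edge i j | i j. 1 \<le> i \<and> i \<le> m \<and> j \<le> n \<and> ((h i j \<noteq> h (i - 1) j) \<noteq> even (i + j))}"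

lemma vert_edge_in_pfpl_of_height:
  "vert_edge i j \<in> pfpl_of_height m n h \<longleftrightarrow>
     i \<le> m \<and> 1 \<le> j \<and> j \<le> n \<and> ((h i j \<noteq> h i (j - 1)) \<noteq> odd (i + j))"
  by (auto simp: pfpl_of_height_def)

lemma horiz_edge_in_pfpl_of_height:
  "horiz_edge i j \<in> pfpl_of_height m n h \<longleftrightarrow>
     1 \<le> i \<and> i \<le> m \<and> j \<le> n \<and> ((h i j \<noteq> h (i - 1) j) \<noteq> even (i + j))"
  by (auto simp: pfpl_of_height_def)

lemma pfpl_of_height_subset: "pfpl_of_height m n h \<subseteq> Gedges m n"
  by (auto simp: pfpl_of_height_def)

lemma pfpl_of_height_cong:
  assumes "\<And>i j. i \<le> m \<Longrightarrow> j \<le> n \<Longrightarrow> h i j = h' i j"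
  shows "pfpl_of_height m n h = pfpl_of_height m n h'"
proof -
  have "h i (j - 1) = h' i (j - 1)" "h (i - 1) j = h' (i - 1) j" if "i \<le> m" "j \<le> n" for i j
    using assms that by auto
  then show ?thesis unfolding pfpl_of_height_def using assms by auto
qed

lemma degree_two_balance:
  "of_bool u + of_bool d + of_bool l + of_bool r = (2::nat) \<Longrightarrow>
   of_bool (u \<noteq> p) + of_bool (r \<noteq> p) = (of_bool (l \<noteq> (\<not> p)) + of_bool (d \<noteq> (\<not> p)) :: nat)"
  by (cases p; cases u; cases d; cases l; cases r) simp_all

lemma pfpl_height_Suc_col:
  assumes F: "F \<in> PFPL m n" and "i \<le> m" "b < n"
  shows "pfpl_height F i (Suc b) = pfpl_height F i b + of_bool ((vert_edge i (Suc b) \<in> F) \<noteq> odd (i + Suc b))"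
  using assms(2)
proof (induction i)
  case 0
  then show ?case using PFPL_D(3)[OF F, of "Suc b"] assms(3) by simp
next
  case (Suc i)
  from degree_two_balance[OF PFPL_D(2)[OF F, of i b], of "even (i + b)"]
  show ?case using Suc assms(3) by simp
qed

lemma height_fn_pfpl_height:
  assumes F: "F \<in> PFPL m n"
  shows "height_fn m n (pfpl_height F)"
proof -
  have "pfpl_height F i 0 = 0" if "i \<le> m" for i
    using that by (induction i) (use PFPL_D(4)[OF F] in auto)
  then show ?thesis unfolding height_fn_def using pfpl_height_Suc_col[OF F] by auto
qed

lemma pfpl_of_pfpl_height:
  assumes F: "F \<in> PFPL m n"
  shows "pfpl_of_height m n (pfpl_height F) = F"
proof -
  have V: "vert_edge i j \<in> pfpl_of_height m n (pfpl_height F) \<longleftrightarrow> vert_edge i j \<in> F"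
    if ij: "i \<le> m" "1 \<le> j" "j \<le> n" for i j
  proof -
    obtain b where "j = Suc b" using ij by (cases j) auto
    then show ?thesis
      using pfpl_height_Suc_col[OF F, of i b] ij by (auto simp: vert_edge_in_pfpl_of_height)
  qed
  have H: "horiz_edge i j \<in> pfpl_of_height m n (pfpl_height F) \<longleftrightarrow> horiz_edge i j \<in> F"
    if ij: "1 \<le> i" "i \<le> m" "j \<le> n" for i j
  proof -
    obtain a where "i = Suc a" using ij by (cases i) auto
    then show ?thesis using ij by (auto simp: horiz_edge_in_pfpl_of_height)
  qed
  show ?thesis
  proof (intro set_eqI iffI)
    fix e assume e: "e \<in> pfpl_of_height m n (pfpl_height F)"
    then have "e \<in> Gedges m n" using pfpl_of_height_subset by blast
    then show "e \<in> F" using V H e unfolding Gedges_eq by blast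
  next
    fix e assume e: "e \<in> F"
    then have "e \<in> Gedges m n" using PFPL_D(1)[OF F] by blast
    then show "e \<in> pfpl_of_height m n (pfpl_height F)" using V H e unfolding Gedges_eq by blast
  qed
qed

lemma unit_square_two_edges:
  fixes w x y z :: nat
  assumes "w \<le> x" "x \<le> Suc w" "y \<le> z" "z \<le> Suc y" "w \<le> y" "y \<le> Suc w" "x \<le> z" "z \<le> Suc x"
  shows "of_bool ((x \<noteq> w) \<noteq> p) + of_bool ((z \<noteq> y) \<noteq> (\<not> p)) + of_bool ((y \<noteq> w) \<noteq> (\<not> p))
         + of_bool ((z \<noteq> x) \<noteq> p) = (2::nat)"
proof -
  have "x = w \<or> x = Suc w" "y = w \<or> y = Suc w" using assms by auto
  then show ?thesis using assms by (cases p) auto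
qed

lemma pfpl_of_height_PFPL:
  assumes h: "height_fn m n h"
  shows "pfpl_of_height m n h \<in> PFPL m n"
  unfolding PFPL_iff
proof (intro conjI allI impI)
  fix a b assume ab: "a < m" "b < n"
  have "h a b \<le> h a (Suc b)" "h a (Suc b) \<le> Suc (h a b)"
    "h (Suc a) b \<le> h (Suc a) (Suc b)" "h (Suc a) (Suc b) \<le> Suc (h (Suc a) b)"
    "h a b \<le> h (Suc a) b" "h (Suc a) b \<le> Suc (h a b)"
    "h a (Suc b) \<le> h (Suc a) (Suc b)" "h (Suc a) (Suc b) \<le> Suc (h a (Suc b))"
    using h ab unfolding height_fn_def by auto
  from unit_square_two_edges[OF this, of "even (a + b)"] ab
  show "of_bool (vert_edge a (Suc b) \<in> pfpl_of_height m n h)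
      + of_bool (vert_edge (Suc a) (Suc b) \<in> pfpl_of_height m n h)
      + of_bool (horiz_edge (Suc a) b \<in> pfpl_of_height m n h)
      + of_bool (horiz_edge (Suc a) (Suc b) \<in> pfpl_of_height m n h) = (2::nat)"
    by (simp add: vert_edge_in_pfpl_of_height horiz_edge_in_pfpl_of_height)
next
  show "pfpl_of_height m n h \<subseteq> Gedges m n" by (rule pfpl_of_height_subset)
next
  fix j assume "1 \<le> j \<and> j \<le> n"
  then show "vert_edge 0 j \<in> pfpl_of_height m n h \<longleftrightarrow> odd j"
    using h unfolding vert_edge_in_pfpl_of_height height_fn_def by auto
next
  fix i assume "1 \<le> i \<and> i \<le> m"
  then show "horiz_edge i 0 \<in> pfpl_of_height m n h \<longleftrightarrow> even i"
    using h unfolding horiz_edge_in_pfpl_of_height height_fn_def by auto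
qed

lemma pfpl_height_pfpl_of_height:
  assumes h: "height_fn m n h" and "i \<le> m" "j \<le> n"
  shows "pfpl_height (pfpl_of_height m n h) i j = h i j"
  using assms(2)
proof (induction i)
  case 0
  then show ?case using h assms(3) by (simp add: height_fn_def)
next
  case (Suc i)
  then show ?case
    using height_fn_col[OF h, of i j] assms(3) by (auto simp: horiz_edge_in_pfpl_of_height)
qed

definition pfpl_to_ideal :: "nat \<Rightarrow> nat \<Rightarrow> (nat \<times> nat) set set \<Rightarrow> (int \<times> int \<times> int) set" where
  "pfpl_to_ideal m n F = ideal_of_height m n (pfpl_height F)"

theorem bij_betw_pfpl_to_ideal: "bij_betw (pfpl_to_ideal m n) (PFPL m n) (Pmn.ideals m n)"
  unfolding bij_betw_def
proof
  show "inj_on (pfpl_to_ideal m n) (PFPL m n)"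
  proof (rule inj_onI)
    fix F F' assume F: "F \<in> PFPL m n" and F': "F' \<in> PFPL m n"
      and eq: "pfpl_to_ideal m n F = pfpl_to_ideal m n F'"
    have "pfpl_height F i j = pfpl_height F' i j" if "i \<le> m" "j \<le> n" for i j
      using height_eq_if_ideal_of_height_eq[OF height_fn_pfpl_height[OF F] height_fn_pfpl_height[OF F']]
        eq that unfolding pfpl_to_ideal_def by blast
    then have "pfpl_of_height m n (pfpl_height F) = pfpl_of_height m n (pfpl_height F')"
      by (rule pfpl_of_height_cong)
    then show "F = F'" using pfpl_of_pfpl_height[OF F] pfpl_of_pfpl_height[OF F'] by simp
  qed
  have "X \<in> pfpl_to_ideal m n ` PFPL m n" if X: "X \<in> Pmn.ideals m n" for X
  proof -
    let ?h = "height_of_ideal X"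
    have h: "height_fn m n ?h" by (rule height_fn_height_of_ideal[OF X])
    have "pfpl_to_ideal m n (pfpl_of_height m n ?h) = ideal_of_height m n ?h"
      unfolding pfpl_to_ideal_def
      by (rule ideal_of_height_cong) (use pfpl_height_pfpl_of_height[OF h] in auto)
    then show ?thesis
      using pfpl_of_height_PFPL[OF h] ideal_of_height_of_ideal[OF X] by (simp add: rev_image_eqI)
  qed
  moreover have "pfpl_to_ideal m n F \<in> Pmn.ideals m n" if "F \<in> PFPL m n" for F
    unfolding pfpl_to_ideal_def by (rule ideal_of_height_ideal[OF height_fn_pfpl_height[OF that]])
  ultimately show "pfpl_to_ideal m n ` PFPL m n = Pmn.ideals m n" by blast
qed

section \<open>The local action as a toggle\<close>

definition unit_nbhd :: "bool \<Rightarrow> bool \<Rightarrow> nat \<Rightarrow> nat \<Rightarrow> nat \<Rightarrow> nat \<Rightarrow> nat \<Rightarrow> bool" where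
  "unit_nbhd im jn nN nW nS nE c \<longleftrightarrow> nN \<le> c \<and> c \<le> Suc nN \<and> nW \<le> c \<and> c \<le> Suc nW
     \<and> (im \<longrightarrow> c \<le> nS \<and> nS \<le> Suc c) \<and> (jn \<longrightarrow> c \<le> nE \<and> nE \<le> Suc c)"

text \<open>The value \<open>c\<close> of a square with neighbours \<open>nN, nW, nS, nE\<close> is raised at a local minimum
  and lowered at a local maximum; \<open>im\<close> and \<open>jn\<close> record whether the southern and eastern
  neighbours exist.\<close>
definition flip_value :: "bool \<Rightarrow> bool \<Rightarrow> nat \<Rightarrow> nat \<Rightarrow> nat \<Rightarrow> nat \<Rightarrow> nat \<Rightarrow> nat" where
  "flip_value im jn nN nW nS nE c =
     (if nN = c \<and> nW = c \<and> (im \<longrightarrow> nS = Suc c) \<and> (jn \<longrightarrow> nE = Suc c) then Suc c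
      else if Suc nN = c \<and> Suc nW = c \<and> (im \<longrightarrow> nS = c) \<and> (jn \<longrightarrow> nE = c) then c - 1
      else c)"

definition flip_height :: "nat \<Rightarrow> nat \<Rightarrow> (nat \<Rightarrow> nat \<Rightarrow> nat) \<Rightarrow> nat \<times> nat \<Rightarrow> nat \<Rightarrow> nat \<Rightarrow> nat" where
  "flip_height m n h q = (case q of (i, j) \<Rightarrow>
     if i = 0 \<or> j = 0 then h
     else h(i := (h i)(j := flip_value (i < m) (j < n) (h (i - 1) j) (h i (j - 1)) (h (Suc i) j) (h i (Suc j)) (h i j))))"

lemma flip_height_boundary: "i = 0 \<or> j = 0 \<Longrightarrow> flip_height m n h (i, j) = h"
  by (simp add: flip_height_def)

lemma flip_height_apply:
  "1 \<le> i \<Longrightarrow> 1 \<le> j \<Longrightarrow> flip_height m n h (i, j) a b =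
     (if a = i \<and> b = j
      then flip_value (i < m) (j < n) (h (i - 1) j) (h i (j - 1)) (h (Suc i) j) (h i (Suc j)) (h i j)
      else h a b)"
  by (simp add: flip_height_def)

lemma unit_nbhd_height_fn:
  assumes h: "height_fn m n h" and "1 \<le> i" "i \<le> m" "1 \<le> j" "j \<le> n"
  shows "unit_nbhd (i < m) (j < n) (h (i - 1) j) (h i (j - 1)) (h (Suc i) j) (h i (Suc j)) (h i j)"
  using height_fn_col[OF h, of "i - 1" j] height_fn_row[OF h, of i "j - 1"]
    height_fn_col[OF h, of i j] height_fn_row[OF h, of i j] assms(2-)
  by (simp add: unit_nbhd_def)

lemma unit_nbhd_flip_value:
  assumes "unit_nbhd im jn nN nW nS nE c"
  shows "unit_nbhd im jn nN nW nS nE (flip_value im jn nN nW nS nE c)"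
  using assms unfolding unit_nbhd_def flip_value_def by (cases c) auto

lemma height_fn_flip_height:
  assumes h: "height_fn m n h" and ij: "i \<le> m" "j \<le> n"
  shows "height_fn m n (flip_height m n h (i, j))"
proof (cases "i = 0 \<or> j = 0")
  case True
  then show ?thesis using h by (simp add: flip_height_boundary)
next
  case False
  then have ij1: "1 \<le> i" "1 \<le> j" by auto
  let ?h = "flip_height m n h (i, j)"
  have nbhd: "unit_nbhd (i < m) (j < n) (?h (i - 1) j) (?h i (j - 1)) (?h (Suc i) j) (?h i (Suc j)) (?h i j)"
  proof -
    have "i - 1 \<noteq> i" "j - 1 \<noteq> j" using ij1 by auto
    then show ?thesis
      using unit_nbhd_flip_value[OF unit_nbhd_height_fn[OF h ij1(1) ij(1) ij1(2) ij(2)]] ij1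
      by (simp add: flip_height_apply)
  qed
  have col: "?h a b \<le> ?h (Suc a) b \<and> ?h (Suc a) b \<le> Suc (?h a b)" if "a < m" "b \<le> n" for a b
  proof (cases "(a = i \<or> Suc a = i) \<and> b = j")
    case True
    then show ?thesis using nbhd that by (auto simp: unit_nbhd_def)
  next
    case False
    then show ?thesis using height_fn_col[OF h that] ij1 by (auto simp: flip_height_apply)
  qed
  have row: "?h a b \<le> ?h a (Suc b) \<and> ?h a (Suc b) \<le> Suc (?h a b)" if "a \<le> m" "b < n" for a b
  proof (cases "a = i \<and> (b = j \<or> Suc b = j)")
    case True
    then show ?thesis using nbhd that by (auto simp: unit_nbhd_def)
  next
    case False
    then show ?thesis using height_fn_row[OF h that] ij1 by (auto simp: flip_height_apply)
  qed
  show ?thesis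
    using col row h ij1 unfolding height_fn_def by (auto simp: flip_height_apply)
qed

definition square_sides :: "nat \<Rightarrow> nat \<Rightarrow> nat \<Rightarrow> nat \<Rightarrow> (nat \<times> nat) set set" where
  "square_sides m n i j = {horiz_edge i j, horiz_edge (Suc i) j, vert_edge i j, vert_edge i (Suc j)} \<inter> Gedges m n"

definition side_set :: "nat \<Rightarrow> nat \<Rightarrow> bool \<times> bool \<times> bool \<times> bool \<Rightarrow> (nat \<times> nat) set set" where
  "side_set i j z = (case z of (t, b, l, r) \<Rightarrow>
     {e. (e = horiz_edge i j \<and> t) \<or> (e = horiz_edge (Suc i) j \<and> b) \<or> (e = vert_edge i j \<and> l)
         \<or> (e = vert_edge i (Suc j) \<and> r)})"

lemma side_set_eq_iff: "side_set i j z = side_set i j z' \<longleftrightarrow> z = z'"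
proof
  assume eq: "side_set i j z = side_set i j z'"
  obtain t b l r t' b' l' r' where z: "z = (t, b, l, r)" "z' = (t', b', l', r')"
    by (cases z; cases z') auto
  have "e \<in> side_set i j z \<longleftrightarrow> e \<in> side_set i j z'" for e using eq by simp
  from this[of "horiz_edge i j"] this[of "horiz_edge (Suc i) j"] this[of "vert_edge i j"]
    this[of "vert_edge i (Suc j)"]
  show "z = z'" using z by (simp add: side_set_def)
qed simp

lemma side_set_transpose:
  "side_set i j (transpose A B z) = transpose (side_set i j A) (side_set i j B) (side_set i j z)"
  by (simp add: transpose_def side_set_eq_iff)

text \<open>Around a square of parity \<open>ev\<close>, the sides of the configuration of a height function, and
  the sides it has when the square is a local minimum or a local maximum.\<close>
definition side_pattern :: "bool \<Rightarrow> bool \<Rightarrow> bool \<Rightarrow> nat \<Rightarrow> nat \<Rightarrow> nat \<Rightarrow> nat \<Rightarrow> nat \<Rightarrow> bool \<times> bool \<times> bool \<times> bool" where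
  "side_pattern ev im jn nN nW nS nE c =
     ((c \<noteq> nN) \<noteq> ev, im \<and> ((nS \<noteq> c) \<noteq> (\<not> ev)), (c \<noteq> nW) \<noteq> (\<not> ev), jn \<and> ((nE \<noteq> c) \<noteq> ev))"

definition raise_pattern :: "bool \<Rightarrow> bool \<Rightarrow> bool \<Rightarrow> bool \<times> bool \<times> bool \<times> bool" where
  "raise_pattern ev im jn = (ev, im \<and> ev, \<not> ev, jn \<and> \<not> ev)"

definition lower_pattern :: "bool \<Rightarrow> bool \<Rightarrow> bool \<Rightarrow> bool \<times> bool \<times> bool \<times> bool" where
  "lower_pattern ev im jn = (\<not> ev, im \<and> \<not> ev, ev, jn \<and> ev)"

lemma side_pattern_flip_value:
  assumes "unit_nbhd im jn nN nW nS nE c"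
  shows "side_pattern ev im jn nN nW nS nE (flip_value im jn nN nW nS nE c) =
    transpose (raise_pattern ev im jn) (lower_pattern ev im jn) (side_pattern ev im jn nN nW nS nE c)"
proof -
  let ?raise = "nN = c \<and> nW = c \<and> (im \<longrightarrow> nS = Suc c) \<and> (jn \<longrightarrow> nE = Suc c)"
  let ?lower = "Suc nN = c \<and> Suc nW = c \<and> (im \<longrightarrow> nS = c) \<and> (jn \<longrightarrow> nE = c)"
  have nb: "nN = c \<or> Suc nN = c" "nW = c \<or> Suc nW = c"
    "\<not> im \<or> nS = c \<or> nS = Suc c" "\<not> jn \<or> nE = c \<or> nE = Suc c"
    using assms unfolding unit_nbhd_def by auto
  have raise: "side_pattern ev im jn nN nW nS nE c = raise_pattern ev im jn \<longleftrightarrow> ?raise"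
    and lower: "side_pattern ev im jn nN nW nS nE c = lower_pattern ev im jn \<longleftrightarrow> ?lower"
    using nb unfolding side_pattern_def raise_pattern_def lower_pattern_def
    by (cases ev; cases im; cases jn; auto)+
  consider ?raise | "\<not> ?raise" ?lower | "\<not> ?raise" "\<not> ?lower" by blast
  then show ?thesis
  proof cases
    case 1
    then show ?thesis using raise
      by (cases ev; cases im; cases jn) (auto simp: flip_value_def side_pattern_def raise_pattern_def lower_pattern_def)
  next
    case 2
    then obtain d where "c = Suc d" by auto
    then show ?thesis using 2 lower
      by (cases ev; cases im; cases jn) (auto simp: flip_value_def side_pattern_def raise_pattern_def lower_pattern_def)
  next
    case 3
    then have "flip_value im jn nN nW nS nE c = c"
      unfolding flip_value_def by (simp only: if_False)
    moreover have "side_pattern ev im jn nN nW nS nE c \<noteq> raise_pattern ev im jn"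
      "side_pattern ev im jn nN nW nS nE c \<noteq> lower_pattern ev im jn"
      using 3 raise lower by blast+
    ultimately show ?thesis by simp
  qed
qed

lemma swap_sides_eq_transpose:
  assumes "A \<subseteq> S" "B \<subseteq> S"
  shows "swap_sides S A B F = (F - S) \<union> transpose A B (F \<inter> S)"
  using assms unfolding swap_sides_def transpose_def by auto

lemma local_action_eq_transpose:
  assumes ij: "1 \<le> i" "i \<le> m" "1 \<le> j" "j \<le> n"
  defines "ev \<equiv> even (i + j)"
  shows "local_action m n (i, j) F = (F - square_sides m n i j) \<union>
     transpose (side_set i j (raise_pattern ev (i < m) (j < n))) (side_set i j (lower_pattern ev (i < m) (j < n)))
       (F \<inter> square_sides m n i j)"
proof -
  define A where "A = (if i < m \<and> j < n then {horiz_edge i j, horiz_edge (Suc i) j}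
    else if i < m then {vert_edge i j} else if j < n then {horiz_edge i j} else {vert_edge i j})"
  define B where "B = (if i < m \<and> j < n then {vert_edge i j, vert_edge i (Suc j)}
    else if i < m then {horiz_edge i j, horiz_edge (Suc i) j}
    else if j < n then {vert_edge i j, vert_edge i (Suc j)} else {horiz_edge i j})"
  have sides: "sq_top a b = horiz_edge a b" "sq_bottom a b = horiz_edge (Suc a) b"
    "sq_left a b = vert_edge a b" "sq_right a b = vert_edge a (Suc b)" for a b
    by (simp_all add: sq_top_def sq_bottom_def sq_left_def sq_right_def horiz_edge_def vert_edge_def)
  have le_pred: "Suc 0 \<le> a \<Longrightarrow> a \<le> b - Suc 0 \<longleftrightarrow> a < b" for a b :: nat by auto
  have "local_action m n (i, j) F = swap_sides (square_sides m n i j) A B F"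
    using ij by (cases "i < m"; cases "j < n")
      (simp_all add: local_action_def Let_def sides square_sides_def A_def B_def le_pred)
  also have "\<dots> = (F - square_sides m n i j) \<union> transpose A B (F \<inter> square_sides m n i j)"
    by (rule swap_sides_eq_transpose) (use ij in \<open>auto simp: A_def B_def square_sides_def\<close>)
  also have "transpose A B = transpose (side_set i j (raise_pattern ev (i < m) (j < n)))
      (side_set i j (lower_pattern ev (i < m) (j < n)))"
  proof -
    have "side_set i j (t, b, l, r) = (if t then insert (horiz_edge i j) else id)
        ((if b then insert (horiz_edge (Suc i) j) else id) ((if l then insert (vert_edge i j) else id)
        ((if r then insert (vert_edge i (Suc j)) else id) {})))" for t b l r
      by (auto simp: side_set_def)
    then have "{A, B} = {side_set i j (raise_pattern ev (i < m) (j < n)), side_set i j (lower_pattern ev (i < m) (j < n))}"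
      unfolding A_def B_def raise_pattern_def lower_pattern_def
      by (cases ev; cases "i < m"; cases "j < n") (simp_all add: insert_commute)
    then show ?thesis by (auto simp: doubleton_eq_iff transpose_commute)
  qed
  finally show ?thesis .
qed

lemma pfpl_of_height_Int_square_sides:
  assumes ij: "1 \<le> i" "i \<le> m" "1 \<le> j" "j \<le> n"
  shows "pfpl_of_height m n g \<inter> square_sides m n i j = side_set i j
    (side_pattern (even (i + j)) (i < m) (j < n) (g (i - 1) j) (g i (j - 1)) (g (Suc i) j) (g i (Suc j)) (g i j))"
proof -
  have "horiz_edge i j \<in> pfpl_of_height m n g \<longleftrightarrow> (g i j \<noteq> g (i - 1) j) \<noteq> even (i + j)"
    "horiz_edge (Suc i) j \<in> pfpl_of_height m n g \<longleftrightarrow> i < m \<and> ((g (Suc i) j \<noteq> g i j) \<noteq> (\<not> even (i + j)))"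
    "vert_edge i j \<in> pfpl_of_height m n g \<longleftrightarrow> (g i j \<noteq> g i (j - 1)) \<noteq> (\<not> even (i + j))"
    "vert_edge i (Suc j) \<in> pfpl_of_height m n g \<longleftrightarrow> j < n \<and> ((g i (Suc j) \<noteq> g i j) \<noteq> even (i + j))"
    using ij by (auto simp: horiz_edge_in_pfpl_of_height vert_edge_in_pfpl_of_height)
  then show ?thesis
    using pfpl_of_height_subset[of m n g]
    unfolding square_sides_def side_set_def side_pattern_def by auto
qed

lemma pfpl_of_height_update_outside:
  assumes "1 \<le> i" "1 \<le> j" and upd: "\<And>a b. (a, b) \<noteq> (i, j) \<Longrightarrow> h' a b = h a b"
    and e: "e \<notin> {horiz_edge i j, horiz_edge (Suc i) j, vert_edge i j, vert_edge i (Suc j)}"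
  shows "e \<in> pfpl_of_height m n h' \<longleftrightarrow> e \<in> pfpl_of_height m n h"
proof (cases "e \<in> Gedges m n")
  case True
  then consider (V) i' j' where "e = vert_edge i' j'" "i' \<le> m" "1 \<le> j'" "j' \<le> n"
    | (H) i' j' where "e = horiz_edge i' j'" "1 \<le> i'" "i' \<le> m" "j' \<le> n"
    unfolding Gedges_eq by blast
  then show ?thesis
  proof cases
    case V
    then have "(i', j') \<noteq> (i, j)" "(i', j' - 1) \<noteq> (i, j)" using e by auto
    then show ?thesis using V upd[of i' j'] upd[of i' "j' - 1"] by (simp add: vert_edge_in_pfpl_of_height)
  next
    case H
    then have "(i', j') \<noteq> (i, j)" "(i' - 1, j') \<noteq> (i, j)" using e by auto
    then show ?thesis using H upd[of i' j'] upd[of "i' - 1" j'] by (simp add: horiz_edge_in_pfpl_of_height)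
  qed
qed (use pfpl_of_height_subset in blast)

lemma local_action_pfpl_of_height:
  assumes h: "height_fn m n h" and ij: "1 \<le> i" "i \<le> m" "1 \<le> j" "j \<le> n"
  shows "local_action m n (i, j) (pfpl_of_height m n h) = pfpl_of_height m n (flip_height m n h (i, j))"
proof -
  let ?h = "flip_height m n h (i, j)" and ?S = "square_sides m n i j" and ?ev = "even (i + j)"
  let ?transpose = "transpose (side_set i j (raise_pattern ?ev (i < m) (j < n)))
    (side_set i j (lower_pattern ?ev (i < m) (j < n)))"
  have upd: "?h a b = h a b" if "(a, b) \<noteq> (i, j)" for a b
    using that ij by (auto simp: flip_height_apply)
  have outside: "pfpl_of_height m n ?h - ?S = pfpl_of_height m n h - ?S"
  proof (intro set_eqI)
    fix e
    show "e \<in> pfpl_of_height m n ?h - ?S \<longleftrightarrow> e \<in> pfpl_of_height m n h - ?S"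
    proof (cases "e \<in> {horiz_edge i j, horiz_edge (Suc i) j, vert_edge i j, vert_edge i (Suc j)}")
      case True
      then show ?thesis using pfpl_of_height_subset unfolding square_sides_def by blast
    next
      case False
      have "e \<in> pfpl_of_height m n ?h \<longleftrightarrow> e \<in> pfpl_of_height m n h"
        by (rule pfpl_of_height_update_outside[where h' = ?h and h = h]) (use ij upd False in auto)
      then show ?thesis by blast
    qed
  qed
  have neighbours: "?h (i - 1) j = h (i - 1) j" "?h i (j - 1) = h i (j - 1)" "?h (Suc i) j = h (Suc i) j"
    "?h i (Suc j) = h i (Suc j)" using ij by (auto intro: upd)
  have "?transpose (pfpl_of_height m n h \<inter> ?S) = pfpl_of_height m n ?h \<inter> ?S"
    unfolding pfpl_of_height_Int_square_sides[OF ij] side_set_transpose[symmetric] neighbours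
    using side_pattern_flip_value[OF unit_nbhd_height_fn[OF h ij]] ij by (simp add: flip_height_apply)
  then show ?thesis
    using local_action_eq_transpose[OF ij, of "pfpl_of_height m n h"] outside by blast
qed

definition fiber :: "nat \<Rightarrow> nat \<Rightarrow> nat \<times> nat \<Rightarrow> (int \<times> int \<times> int) set" where
  "fiber m n q = (case q of (i, j) \<Rightarrow> {x \<in> Pmn m n. fst x = int i - 1 \<and> fst (snd x) = int j - 1})"

lemma mem_fiber_nat:
  "(int a, int b, int k) \<in> fiber m n (i, j) \<longleftrightarrow> (int a, int b, int k) \<in> Pmn m n \<and> i = Suc a \<and> j = Suc b"
  by (auto simp: fiber_def)

lemma fiber_boundary: "i = 0 \<or> j = 0 \<Longrightarrow> fiber m n (i, j) = {}"
  by (auto simp: fiber_def Pmn_def)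

lemma upper_cover_in_ideal_of_height:
  assumes x: "(int a, int b, int k) \<in> Pmn m n"
  shows "(\<exists>u. ((int a, int b, int k), u) \<in> cover_rel m n \<and> u \<in> ideal_of_height m n h) \<longleftrightarrow>
    (k < a \<and> k < h a (Suc b)) \<or> (k < b \<and> k < h (Suc a) b) \<or>
    (k < b \<and> Suc a < m \<and> Suc k < h (Suc (Suc a)) (Suc b)) \<or> (k < a \<and> Suc b < n \<and> Suc k < h (Suc a) (Suc (Suc b)))"
    (is "?L \<longleftrightarrow> ?R")
proof
  assume ?L
  then obtain u where c: "((int a, int b, int k), u) \<in> cover_rel m n" and u: "u \<in> ideal_of_height m n h"
    by blast
  obtain a' b' k' where ue: "u = (int a', int b', int k')"
    using Pmn_nat_coords u ideal_of_height_subset by blast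
  have "(a = Suc a' \<and> b = b' \<and> k = k') \<or> (a = a' \<and> b = Suc b' \<and> k = k') \<or>
      (Suc a = a' \<and> b = b' \<and> Suc k = k') \<or> (a = a' \<and> Suc b = b' \<and> Suc k = k')"
    using c unfolding ue cover_rel_nat by blast
  then show ?R using u unfolding ue mem_ideal_of_height by auto
next
  assume ?R
  then obtain a' b' k' where "((int a, int b, int k), (int a', int b', int k')) \<in> cover_rel m n"
    "(int a', int b', int k') \<in> ideal_of_height m n h"
  proof (elim disjE conjE)
    assume "k < a" "k < h a (Suc b)"
    then show thesis using x that[of "a - 1" b k]
      by (cases a) (simp_all add: cover_rel_def Pmn_def mem_ideal_of_height)
  next
    assume "k < b" "k < h (Suc a) b"
    then show thesis using x that[of a "b - 1" k]
      by (cases b) (simp_all add: cover_rel_def Pmn_def mem_ideal_of_height)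
  next
    assume "k < b" "Suc a < m" "Suc k < h (Suc (Suc a)) (Suc b)"
    then show thesis using x that[of "Suc a" b "Suc k"]
      unfolding mem_ideal_of_height by (simp add: cover_rel_def Pmn_def)
  next
    assume "k < a" "Suc b < n" "Suc k < h (Suc a) (Suc (Suc b))"
    then show thesis using x that[of a "Suc b" "Suc k"]
      unfolding mem_ideal_of_height by (simp add: cover_rel_def Pmn_def)
  qed
  then show ?L by blast
qed

lemma lower_covers_in_ideal_of_height:
  assumes x: "(int a, int b, int k) \<in> Pmn m n"
  shows "(\<forall>w. (w, (int a, int b, int k)) \<in> cover_rel m n \<longrightarrow> w \<in> ideal_of_height m n h) \<longleftrightarrow>
    (Suc a < m \<longrightarrow> k < h (Suc (Suc a)) (Suc b)) \<and> (Suc b < n \<longrightarrow> k < h (Suc a) (Suc (Suc b))) \<and>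
    (0 < k \<longrightarrow> k - 1 < h a (Suc b)) \<and> (0 < k \<longrightarrow> k - 1 < h (Suc a) b)"
    (is "?L \<longleftrightarrow> ?R")
proof
  assume L: ?L
  have "Suc a < m \<Longrightarrow> (int (Suc a), int b, int k) \<in> ideal_of_height m n h"
    "Suc b < n \<Longrightarrow> (int a, int (Suc b), int k) \<in> ideal_of_height m n h"
    "0 < k \<Longrightarrow> (int (a - 1), int b, int (k - 1)) \<in> ideal_of_height m n h"
    "0 < k \<Longrightarrow> (int a, int (b - 1), int (k - 1)) \<in> ideal_of_height m n h"
    using x by (auto intro!: L[rule_format] simp: cover_rel_def Pmn_def)
  then show ?R using x unfolding mem_ideal_of_height mem_Pmn_nat by (cases a; cases b) auto
next
  assume R: ?R
  show ?L
  proof (intro allI impI)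
    fix w assume c: "(w, (int a, int b, int k)) \<in> cover_rel m n"
    obtain a' b' k' where we: "w = (int a', int b', int k')"
      using Pmn_nat_coords Pmn.cover_in_carrier[OF c] by blast
    have "(a' = Suc a \<and> b' = b \<and> k' = k) \<or> (a' = a \<and> b' = Suc b \<and> k' = k) \<or>
       (Suc a' = a \<and> b' = b \<and> Suc k' = k) \<or> (a' = a \<and> Suc b' = b \<and> Suc k' = k)"
      and "(int a', int b', int k') \<in> Pmn m n"
      using c unfolding we cover_rel_nat by blast+
    then show "w \<in> ideal_of_height m n h" using R unfolding we mem_ideal_of_height mem_Pmn_nat by auto
  qed
qed

lemma toggle_arith_inside:
  fixes a b k c nN nW nS nE :: nat
  assumes "k < c" and nbhd: "unit_nbhd (Suc a < m) (Suc b < n) nN nW nS nE c"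
    and bounds: "c \<le> Suc a" "c \<le> Suc b" "nN \<le> a" "nW \<le> b"
      "Suc a < m \<Longrightarrow> nS \<le> Suc b" "Suc b < n \<Longrightarrow> nE \<le> Suc a"
  shows "(k < a \<and> k < nN) \<or> (k < b \<and> k < nW) \<or> (k < b \<and> Suc a < m \<and> Suc k < nS)
      \<or> (k < a \<and> Suc b < n \<and> Suc k < nE)
     \<longleftrightarrow> k < flip_value (Suc a < m) (Suc b < n) nN nW nS nE c"
proof -
  note nb = nbhd[unfolded unit_nbhd_def]
  let ?lower = "Suc nN = c \<and> Suc nW = c \<and> (Suc a < m \<longrightarrow> nS = c) \<and> (Suc b < n \<longrightarrow> nE = c)"
  consider "Suc k < c" | "Suc k = c" "?lower" | "Suc k = c" "\<not> ?lower"
    using \<open>k < c\<close> by linarith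
  then show ?thesis
  proof cases
    case 1
    then show ?thesis using bounds nb by (auto simp: flip_value_def)
  next
    case 2
    then show ?thesis by (auto simp: flip_value_def)
  next
    case 3
    then have "nN = c \<or> nW = c \<or> (Suc a < m \<and> nS = Suc c) \<or> (Suc b < n \<and> nE = Suc c)"
      using nb by auto
    then show ?thesis using 3 bounds by (elim disjE) (auto simp: flip_value_def)
  qed
qed

lemma toggle_arith_outside:
  fixes k c nN nW nS nE :: nat
  assumes "c \<le> k" and nbhd: "unit_nbhd im jn nN nW nS nE c"
  shows "(im \<longrightarrow> k < nS) \<and> (jn \<longrightarrow> k < nE) \<and> (0 < k \<longrightarrow> k - 1 < nN) \<and> (0 < k \<longrightarrow> k - 1 < nW)
     \<longleftrightarrow> k < flip_value im jn nN nW nS nE c"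
proof -
  note nb = nbhd[unfolded unit_nbhd_def]
  let ?raise = "nN = c \<and> nW = c \<and> (im \<longrightarrow> nS = Suc c) \<and> (jn \<longrightarrow> nE = Suc c)"
  consider "c < k" | "k = c" "?raise" | "k = c" "\<not> ?raise"
    using \<open>c \<le> k\<close> by linarith
  then show ?thesis
  proof cases
    case 1
    then show ?thesis using nb by (cases k) (auto simp: flip_value_def)
  next
    case 2
    then show ?thesis by (auto simp: flip_value_def)
  next
    case 3
    then have "flip_value im jn nN nW nS nE c \<le> c" unfolding flip_value_def by (simp only: if_False) simp
    then show ?thesis using 3 nb by auto
  qed
qed

lemma in_toggle_ideal_of_height:
  assumes h: "height_fn m n h" and x: "(int a, int b, int k) \<in> Pmn m n"
  shows "Pmn.in_toggle m n (int a, int b, int k) (ideal_of_height m n h) \<longleftrightarrow>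
    k < flip_value (Suc a < m) (Suc b < n) (h a (Suc b)) (h (Suc a) b) (h (Suc (Suc a)) (Suc b))
      (h (Suc a) (Suc (Suc b))) (h (Suc a) (Suc b))"
proof -
  have ab: "k \<le> a" "k \<le> b" "a < m" "b < n" using x by (simp_all add: mem_Pmn_nat)
  have "unit_nbhd (Suc a < m) (Suc b < n) (h a (Suc b)) (h (Suc a) b) (h (Suc (Suc a)) (Suc b))
      (h (Suc a) (Suc (Suc b))) (h (Suc a) (Suc b))"
    using unit_nbhd_height_fn[OF h, of "Suc a" "Suc b"] ab by simp
  moreover have "h (Suc a) (Suc b) \<le> Suc a" "h (Suc a) (Suc b) \<le> Suc b" "h a (Suc b) \<le> a" "h (Suc a) b \<le> b"
    "Suc a < m \<Longrightarrow> h (Suc (Suc a)) (Suc b) \<le> Suc b" "Suc b < n \<Longrightarrow> h (Suc a) (Suc (Suc b)) \<le> Suc a"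
    using height_fn_le[OF h] ab by simp_all
  ultimately show ?thesis
    unfolding Pmn.in_toggle_def upper_cover_in_ideal_of_height[OF x] lower_covers_in_ideal_of_height[OF x]
    using toggle_arith_inside[of k "h (Suc a) (Suc b)"] toggle_arith_outside[of "h (Suc a) (Suc b)" k] ab
    by (cases "k < h (Suc a) (Suc b)") (simp_all add: mem_ideal_of_height)
qed

lemma ideal_of_height_flip_height:
  assumes h: "height_fn m n h" and ij: "1 \<le> i" "i \<le> m" "1 \<le> j" "j \<le> n"
  shows "ideal_of_height m n (flip_height m n h (i, j)) = Pmn.toggle m n (fiber m n (i, j)) (ideal_of_height m n h)"
proof (rule set_eqI)
  fix x
  show "x \<in> ideal_of_height m n (flip_height m n h (i, j)) \<longleftrightarrow> x \<in> Pmn.toggle m n (fiber m n (i, j)) (ideal_of_height m n h)"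
  proof (cases "x \<in> Pmn m n")
    case False
    then show ?thesis
      using ideal_of_height_subset unfolding Pmn.toggle_def by blast
  next
    case True
    then obtain a b k where x: "x = (int a, int b, int k)" using Pmn_nat_coords by blast
    show ?thesis
    proof (cases "i = Suc a \<and> j = Suc b")
      case False
      then have "x \<notin> fiber m n (i, j)" unfolding x mem_fiber_nat by blast
      then show ?thesis
        using False ij unfolding x Pmn.toggle_outside[OF \<open>x \<notin> _\<close>[unfolded x]]
        by (auto simp: mem_ideal_of_height flip_height_apply)
    next
      case True
      then have "x \<in> fiber m n (i, j)" unfolding x mem_fiber_nat using \<open>x \<in> Pmn m n\<close> x by simp
      then show ?thesis
        using True \<open>x \<in> Pmn m n\<close> in_toggle_ideal_of_height[OF h, of a b k] ij
        unfolding x Pmn.toggle_inside[OF \<open>x \<in> fiber m n (i, j)\<close>[unfolded x]]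
        by (auto simp: mem_ideal_of_height mem_Pmn_nat flip_height_apply)
    qed
  qed
qed

section \<open>Gyration and rowmotion\<close>

lemma local_action_boundary: "i = 0 \<or> j = 0 \<Longrightarrow> local_action m n (i, j) F = F"
  by (auto simp: local_action_def Let_def)

lemma fold_local_action_pfpl_of_height:
  assumes "\<forall>q \<in> set qs. fst q \<le> m \<and> snd q \<le> n" "height_fn m n h"
  defines "h' \<equiv> fold (\<lambda>q h. flip_height m n h q) qs h"
  shows "height_fn m n h' \<and> fold (local_action m n) qs (pfpl_of_height m n h) = pfpl_of_height m n h'
    \<and> ideal_of_height m n h' = fold (\<lambda>q. Pmn.toggle m n (fiber m n q)) qs (ideal_of_height m n h)"
  unfolding h'_def using assms(1,2)
proof (induction qs arbitrary: h)
  case (Cons q qs)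
  obtain i j where q: "q = (i, j)" by (cases q)
  have ij: "i \<le> m" "j \<le> n" using Cons.prems(1) q by auto
  let ?h = "flip_height m n h (i, j)"
  have "local_action m n (i, j) (pfpl_of_height m n h) = pfpl_of_height m n ?h"
    "ideal_of_height m n ?h = Pmn.toggle m n (fiber m n (i, j)) (ideal_of_height m n h)"
    using local_action_pfpl_of_height[OF Cons.prems(2)] ideal_of_height_flip_height[OF Cons.prems(2)]
      local_action_boundary flip_height_boundary fiber_boundary ij
    by (cases "i = 0 \<or> j = 0"; force)+
  then show ?case
    using Cons.IH[OF _ height_fn_flip_height[OF Cons.prems(2) ij]] Cons.prems(1) q by simp
qed simp

lemma fiber_rank_parity: "x \<in> fiber m n (i, j) \<Longrightarrow> even (Pmn_rank x) = even (i + j)"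
proof -
  assume x: "x \<in> fiber m n (i, j)"
  then have "x \<in> Pmn m n" by (simp add: fiber_def)
  then obtain a b k where xe: "x = (int a, int b, int k)" using Pmn_nat_coords by blast
  then have "k \<le> a" "k \<le> b" "i = Suc a" "j = Suc b"
    using x by (simp_all add: mem_fiber_nat mem_Pmn_nat)
  moreover have "2 * k \<le> a + b" using \<open>k \<le> a\<close> \<open>k \<le> b\<close> by simp
  then have r: "int a + int b - 2 * int k = int (a + b - 2 * k)" by (simp add: of_nat_diff)
  have "Pmn_rank x = a + b - 2 * k" unfolding xe Pmn_rank_def prod.case r nat_int by (rule refl)
  ultimately show ?thesis by (simp add: even_diff_nat)
qed

lemma fold_toggle_fibers:
  assumes "distinct qs" "\<forall>q \<in> set qs. even (fst q + snd q) = e"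
  shows "fold (\<lambda>q. Pmn.toggle m n (fiber m n q)) qs Y = Pmn.toggle m n (\<Union>q \<in> set qs. fiber m n q) Y"
  using assms
proof (induction qs arbitrary: Y)
  case (Cons q qs)
  have same_fiber: "q' = q" if "x \<in> fiber m n q'" "x \<in> fiber m n q" for q' x
    using that by (cases q; cases q') (auto simp: fiber_def)
  have disjoint: "(\<Union>q' \<in> set qs. fiber m n q') \<inter> fiber m n q = {}"
  proof (rule equals0I)
    fix x assume "x \<in> (\<Union>q' \<in> set qs. fiber m n q') \<inter> fiber m n q"
    then obtain q' where "q' \<in> set qs" "x \<in> fiber m n q'" "x \<in> fiber m n q" by blast
    then show False using same_fiber[of x q'] Cons.prems(1) by auto
  qed
  have parity: "even (Pmn_rank x) = e" if "q' \<in> set (q # qs)" "x \<in> fiber m n q'" for q' x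
    using that Cons.prems(2) fiber_rank_parity[of x m n "fst q'" "snd q'"] by auto
  have "\<forall>x \<in> (\<Union>q' \<in> set qs. fiber m n q'). even (Pmn_rank x) = e"
  proof
    fix x assume "x \<in> (\<Union>q' \<in> set qs. fiber m n q')"
    then obtain q' where "q' \<in> set qs" "x \<in> fiber m n q'" by blast
    then show "even (Pmn_rank x) = e" using parity[of q' x] by simp
  qed
  moreover have "\<forall>x \<in> fiber m n q. even (Pmn_rank x) = e" using parity[of q] by simp
  ultimately have "Pmn.cover_free m n (\<Union>q \<in> set qs. fiber m n q) (fiber m n q)"
    by (rule Pmn.cover_free_rank_parity)
  then have "Pmn.toggle m n (\<Union>q \<in> set qs. fiber m n q) (Pmn.toggle m n (fiber m n q) Y) =
      Pmn.toggle m n (\<Union>q \<in> set (q # qs). fiber m n q) Y"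
    using Pmn.toggle_Un[OF disjoint] by (simp add: Un_commute)
  then show ?case using Cons by simp
qed simp

lemma set_squares_of_parity:
  "set (squares_of_parity m n e) = {(i, j). i \<le> m \<and> j \<le> n \<and> even (i + j) = e}"
  unfolding squares_of_parity_def by (auto simp del: upt_Suc simp: less_Suc_eq_le)

lemma distinct_squares_of_parity: "distinct (squares_of_parity m n e)"
proof -
  have gen: "distinct (concat (map (\<lambda>i. concat (map (\<lambda>j. if P i j then [(i, j)] else []) ys)) xs))"
    if "distinct xs" "distinct ys" for P :: "nat \<Rightarrow> nat \<Rightarrow> bool" and xs ys
    using that
  proof (induction xs)
    case (Cons x xs)
    have "distinct (concat (map (\<lambda>j. if P x j then [(x, j)] else []) ys))"
      using Cons.prems(2) by (induction ys) auto
    then show ?case using Cons by auto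
  qed simp
  show ?thesis unfolding squares_of_parity_def by (intro gen) simp_all
qed

lemma union_fibers_squares_of_parity:
  "(\<Union>q \<in> set (squares_of_parity m n e). fiber m n q) = {x \<in> Pmn m n. even (Pmn_rank x) = e}"
proof (intro set_eqI iffI)
  fix x assume "x \<in> (\<Union>q \<in> set (squares_of_parity m n e). fiber m n q)"
  then obtain i j where ij: "(i, j) \<in> set (squares_of_parity m n e)" and x: "x \<in> fiber m n (i, j)"
    by auto
  have "x \<in> Pmn m n" using x by (simp add: fiber_def)
  moreover have "even (Pmn_rank x) = even (i + j)" by (rule fiber_rank_parity[OF x])
  ultimately show "x \<in> {x \<in> Pmn m n. even (Pmn_rank x) = e}"
    using ij by (simp add: set_squares_of_parity)
next
  fix x assume x: "x \<in> {x \<in> Pmn m n. even (Pmn_rank x) = e}"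
  then obtain a b k where xe: "x = (int a, int b, int k)" using Pmn_nat_coords by blast
  then have "x \<in> fiber m n (Suc a, Suc b)" using x by (simp add: mem_fiber_nat)
  moreover have "(Suc a, Suc b) \<in> set (squares_of_parity m n e)"
    using x xe fiber_rank_parity[OF calculation] by (simp add: set_squares_of_parity mem_Pmn_nat)
  ultimately show "x \<in> (\<Union>q \<in> set (squares_of_parity m n e). fiber m n q)" by blast
qed

theorem pfpl_to_ideal_gyration:
  assumes F: "F \<in> PFPL m n"
  shows "pfpl_to_ideal m n (gyration m n F) =
    Pmn.toggle m n {x \<in> Pmn m n. odd (Pmn_rank x)}
      (Pmn.toggle m n {x \<in> Pmn m n. even (Pmn_rank x)} (pfpl_to_ideal m n F))"
proof -
  define h1 where "h1 = fold (\<lambda>q h. flip_height m n h q) (squares_of_parity m n True) (pfpl_height F)"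
  define h2 where "h2 = fold (\<lambda>q h. flip_height m n h q) (squares_of_parity m n False) h1"
  have in_range: "\<forall>q \<in> set (squares_of_parity m n e). fst q \<le> m \<and> snd q \<le> n" for e
    by (auto simp: set_squares_of_parity)
  have toggles: "fold (\<lambda>q. Pmn.toggle m n (fiber m n q)) (squares_of_parity m n e) Y =
      Pmn.toggle m n {x \<in> Pmn m n. even (Pmn_rank x) = e} Y" for e Y
  proof -
    have "\<forall>q \<in> set (squares_of_parity m n e). even (fst q + snd q) = e"
      by (auto simp: set_squares_of_parity)
    from fold_toggle_fibers[OF distinct_squares_of_parity this, where m = m and n = n]
    show ?thesis unfolding union_fibers_squares_of_parity .
  qed
  have even_step: "height_fn m n h1"
    "fold (local_action m n) (squares_of_parity m n True) (pfpl_of_height m n (pfpl_height F)) = pfpl_of_height m n h1"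
    "ideal_of_height m n h1 = Pmn.toggle m n {x \<in> Pmn m n. even (Pmn_rank x)} (pfpl_to_ideal m n F)"
    using fold_local_action_pfpl_of_height[OF in_range height_fn_pfpl_height[OF F], of True]
    unfolding h1_def toggles pfpl_to_ideal_def by simp_all
  have odd_step: "height_fn m n h2"
    "fold (local_action m n) (squares_of_parity m n False) (pfpl_of_height m n h1) = pfpl_of_height m n h2"
    "ideal_of_height m n h2 = Pmn.toggle m n {x \<in> Pmn m n. odd (Pmn_rank x)} (ideal_of_height m n h1)"
    using fold_local_action_pfpl_of_height[OF in_range even_step(1), of False]
    unfolding h2_def toggles by simp_all
  have "gyration m n F = pfpl_of_height m n h2"
    unfolding gyration_def
    by (subst (1) pfpl_of_pfpl_height[OF F, symmetric]) (simp only: even_step(2) odd_step(2))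
  then have "pfpl_to_ideal m n (gyration m n F) = ideal_of_height m n h2"
    unfolding pfpl_to_ideal_def
    by (intro ideal_of_height_cong) (simp add: pfpl_height_pfpl_of_height[OF odd_step(1)])
  then show ?thesis using odd_step(3) even_step(3) by simp
qed

theorem theorem4p6:
  fixes m n :: nat
  assumes "0 < m" and "0 < n"
  shows "\<exists>\<Phi>. bij_betw \<Phi> (PFPL m n) (order_ideals m n) \<and>
              (\<forall>F \<in> PFPL m n. \<Phi> (gyration m n F) = rowmotion m n (\<Phi> F))"
proof -
  obtain C where C: "bij_betw C (Pmn.ideals m n) (Pmn.ideals m n)"
    "\<forall>Y \<in> Pmn.ideals m n. C (Pmn.toggle m n {x \<in> Pmn m n. odd (Pmn_rank x)}
        (Pmn.toggle m n {x \<in> Pmn m n. even (Pmn_rank x)} Y)) = Pmn.row m n (C Y)"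
    using Pmn.row_conj_parity_toggles[OF ballI[OF Pmn_rank_le]] by blast
  have "bij_betw (C \<circ> pfpl_to_ideal m n) (PFPL m n) (order_ideals m n)"
    unfolding order_ideals_eq using bij_betw_pfpl_to_ideal C(1) by (rule bij_betw_trans)
  moreover have "(C \<circ> pfpl_to_ideal m n) (gyration m n F) = rowmotion m n ((C \<circ> pfpl_to_ideal m n) F)"
    if "F \<in> PFPL m n" for F
    using C(2) bij_betwE[OF bij_betw_pfpl_to_ideal] that
    by (simp add: pfpl_to_ideal_gyration rowmotion_eq)
  ultimately show ?thesis by blast
qed

end
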